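(* In the setting described in the context, there exist functions $F_1,\dots,F_n$ of the $n-2$ variables $$z^j=\frac{u^{j+2}-\delta_j\,u^1}{u^2},\qquad j\in\{1,\dots,n-2\},$$ where $\delta_j=1$ if $j+2=1(\alpha)$ for some $\alpha\in\{2,\dots,r\}$ and $\delta_j=0$ otherwise, such that $$\overline{\eta}_i=(u^2)^{-d}F_i(z^1,\dots,z^{n-2}),\qquad i\in\{1,\dots,n\}.$$ Moreover there exist a function $f(z^1,\dots,z^{n-2})$ and constants $C_1,C_2$ such that $$F_1=-\sum_{\alpha=2}^r\partial_{z^{1(\alpha)-2}}f+C_1,\qquad F_2=-\sum_{j=1}^{n-2}z^j\,\partial_{z^j}f-(d-1)f+C_2,\qquad F_j=\partial_{z^{j-2}}f\ \ (j\in\{3,\dots,n\}).$$ In particular $\sum_{\alpha=1}^rF_{1(\alpha)}=C_1$ is constant, and $C_1=0$ whenever $d\neq0$.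
   Context: A Dubrovin–Frobenius manifold is an $n$-dimensional manifold $M$ (smooth real, or complex with all data holomorphic) with a flat (pseudo-)Riemannian metric $\eta$ with Levi-Civita connection $\nabla$, a commutative associative product $\circ$ on $TM$ with structure constants $c^i_{jk}$ and unit vector field $e$, and a vector field $E$ (Euler field) such that: $\eta_{il}c^l_{jk}=\eta_{jl}c^l_{ik}$; $\nabla_ic^l_{jk}=\nabla_jc^l_{ik}$; $\nabla e=0$; $\mathcal{L}_Ec^i_{jk}=c^i_{jk}$, $\mathcal{L}_Ee=-e$, $\mathcal{L}_E\eta=(2-d)\eta$ for some constant $d$. $M$ is regular near a point if each Jordan block of the operator $L=E\circ$ corresponds to a different eigenvalue. Standing setting: $M$ is regular and non-semisimple near a point, $L$ has $r$ Jordan blocks of sizes $m_1,\dots,m_r$ with $m_1\ge2$, and one uses the index notation $j(\alpha)=m_1+\dots+m_{\alpha-1}+j$ for $\alpha\in\{1,\dots,r\}$, $j\in\{1,\dots,m_\alpha\}$ (so $j(1)=j$). One works in local (David–Hertling) coordinates $u^1,\dots,u^n$ in which $\partial_{i(\alpha)}\circ\partial_{j(\beta)}=\delta_{\alpha\beta}\partial_{(i+j-1)(\alpha)}$ if $i+j\le m_\alpha+1$ and $=0$ if $i+j\ge m_\alpha+2$; $e=\sum_{\alpha=1}^r\partial_{1(\alpha)}$; $E=\sum_{s=1}^nu^s\partial_s$; and the metric has the block-Hankel form $\eta=\sum_{\alpha}\sum_{i,j=1}^{m_\alpha}\overline{\eta}_{(i+j-1)(\alpha)}\,du^{i(\alpha)}\otimes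 du^{j(\alpha)}$ for functions $\overline{\eta}_{k(\alpha)}$, with $\overline{\eta}_{k(\alpha)}=0$ for $k\ge m_\alpha+1$. Here $\overline{\eta}_i$, $i\in\{1,\dots,n\}$, denotes $\overline{\eta}_{k(\alpha)}$ with $i=k(\alpha)$. *)

theory Defs
  imports "HOL-Analysis.Analysis"
begin

text \<open>Local coordinates: points are vectors u :: real^'n; the coordinate labels
 1..n (n = CARD('n)) are attached to the components by a bijection ix :: nat => 'n,
 so u^i = u $ ix i.\<close>

definition pdv :: "'n::finite \<Rightarrow> (real^'n \<Rightarrow> real) \<Rightarrow> real^'n \<Rightarrow> real" where
  "pdv k h u = deriv (\<lambda>t. h (u + t *\<^sub>R axis k 1)) 0"

text \<open>Smooth (C-infinity) on an open set: all iterated partial derivatives exist and are continuous.\<close>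
definition smooth_on :: "(real^'n::finite) set \<Rightarrow> (real^'n \<Rightarrow> real) \<Rightarrow> bool" where
  "smooth_on U h \<longleftrightarrow> (\<exists>S. h \<in> S \<and> (\<forall>g\<in>S. continuous_on U g \<and>
      (\<forall>k. \<forall>u\<in>U. (\<lambda>t. g (u + t *\<^sub>R axis k 1)) differentiable (at 0)) \<and>
      (\<forall>k. (\<lambda>u. pdv k g u) \<in> S)))"

definition cpd :: "(nat \<Rightarrow> 'n::finite) \<Rightarrow> nat \<Rightarrow> (real^'n \<Rightarrow> real) \<Rightarrow> real^'n \<Rightarrow> real" where
  "cpd ix i h = pdv (ix i) h"

text \<open>Tensor fields in coordinates: functions of (nat) indices in {1..n} and the point.\<close>

definition metric_matrix :: "(nat \<Rightarrow> 'n::finite) \<Rightarrow> (nat \<Rightarrow> nat \<Rightarrow> real^'n \<Rightarrow> real) \<Rightarrow> real^'n \<Rightarrow> real^'n^'n" where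
  "metric_matrix ix g u = (\<chi> k l. g (inv_into {1..CARD('n)} ix k) (inv_into {1..CARD('n)} ix l) u)"

definition inv_metric :: "(nat \<Rightarrow> 'n::finite) \<Rightarrow> (nat \<Rightarrow> nat \<Rightarrow> real^'n \<Rightarrow> real) \<Rightarrow> nat \<Rightarrow> nat \<Rightarrow> real^'n \<Rightarrow> real" where
  "inv_metric ix g i j u = matrix_inv (metric_matrix ix g u) $ ix i $ ix j"

definition christoffel :: "(nat \<Rightarrow> 'n::finite) \<Rightarrow> (nat \<Rightarrow> nat \<Rightarrow> real^'n \<Rightarrow> real) \<Rightarrow> nat \<Rightarrow> nat \<Rightarrow> nat \<Rightarrow> real^'n \<Rightarrow> real" where
  "christoffel ix g k i j u = (1/2) * (\<Sum>l\<in>{1..CARD('n)}. inv_metric ix g k l u *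
      (cpd ix i (g j l) u + cpd ix j (g i l) u - cpd ix l (g i j) u))"

definition riemann :: "(nat \<Rightarrow> 'n::finite) \<Rightarrow> (nat \<Rightarrow> nat \<Rightarrow> real^'n \<Rightarrow> real) \<Rightarrow> nat \<Rightarrow> nat \<Rightarrow> nat \<Rightarrow> nat \<Rightarrow> real^'n \<Rightarrow> real" where
  "riemann ix g l i j k u = cpd ix i (christoffel ix g l j k) u - cpd ix j (christoffel ix g l i k) u
     + (\<Sum>s\<in>{1..CARD('n)}. christoffel ix g l i s u * christoffel ix g s j k u
                          - christoffel ix g l j s u * christoffel ix g s i k u)"

definition cov_c :: "(nat \<Rightarrow> 'n::finite) \<Rightarrow> (nat \<Rightarrow> nat \<Rightarrow> real^'n \<Rightarrow> real) \<Rightarrow> (nat \<Rightarrow> nat \<Rightarrow> nat \<Rightarrow> real^'n \<Rightarrow> real)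
     \<Rightarrow> nat \<Rightarrow> nat \<Rightarrow> nat \<Rightarrow> nat \<Rightarrow> real^'n \<Rightarrow> real" where
  "cov_c ix g c i l j k u = cpd ix i (c l j k) u
     + (\<Sum>s\<in>{1..CARD('n)}. christoffel ix g l i s u * c s j k u
          - christoffel ix g s i j u * c l s k u - christoffel ix g s i k u * c l j s u)"

definition cov_vec :: "(nat \<Rightarrow> 'n::finite) \<Rightarrow> (nat \<Rightarrow> nat \<Rightarrow> real^'n \<Rightarrow> real) \<Rightarrow> (nat \<Rightarrow> real^'n \<Rightarrow> real)
     \<Rightarrow> nat \<Rightarrow> nat \<Rightarrow> real^'n \<Rightarrow> real" where
  "cov_vec ix g v i l u = cpd ix i (v l) u + (\<Sum>s\<in>{1..CARD('n)}. christoffel ix g l i s u * v s u)"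

definition lie_c :: "(nat \<Rightarrow> 'n::finite) \<Rightarrow> (nat \<Rightarrow> real^'n \<Rightarrow> real) \<Rightarrow> (nat \<Rightarrow> nat \<Rightarrow> nat \<Rightarrow> real^'n \<Rightarrow> real)
     \<Rightarrow> nat \<Rightarrow> nat \<Rightarrow> nat \<Rightarrow> real^'n \<Rightarrow> real" where
  "lie_c ix E c i j k u = (\<Sum>s\<in>{1..CARD('n)}. E s u * cpd ix s (c i j k) u - c s j k u * cpd ix s (E i) u
       + c i s k u * cpd ix j (E s) u + c i j s u * cpd ix k (E s) u)"

definition lie_vec :: "(nat \<Rightarrow> 'n::finite) \<Rightarrow> (nat \<Rightarrow> real^'n \<Rightarrow> real) \<Rightarrow> (nat \<Rightarrow> real^'n \<Rightarrow> real)
     \<Rightarrow> nat \<Rightarrow> real^'n \<Rightarrow> real" where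
  "lie_vec ix E v i u = (\<Sum>s\<in>{1..CARD('n)}. E s u * cpd ix s (v i) u - v s u * cpd ix s (E i) u)"

definition lie_metric :: "(nat \<Rightarrow> 'n::finite) \<Rightarrow> (nat \<Rightarrow> real^'n \<Rightarrow> real) \<Rightarrow> (nat \<Rightarrow> nat \<Rightarrow> real^'n \<Rightarrow> real)
     \<Rightarrow> nat \<Rightarrow> nat \<Rightarrow> real^'n \<Rightarrow> real" where
  "lie_metric ix E g i j u = (\<Sum>s\<in>{1..CARD('n)}. E s u * cpd ix s (g i j) u
       + g s j u * cpd ix i (E s) u + g i s u * cpd ix j (E s) u)"

definition frobenius_coords :: "(nat \<Rightarrow> 'n::finite) \<Rightarrow> (real^'n) set \<Rightarrow> (nat \<Rightarrow> nat \<Rightarrow> real^'n \<Rightarrow> real)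
    \<Rightarrow> (nat \<Rightarrow> nat \<Rightarrow> nat \<Rightarrow> real^'n \<Rightarrow> real) \<Rightarrow> (nat \<Rightarrow> real^'n \<Rightarrow> real) \<Rightarrow> (nat \<Rightarrow> real^'n \<Rightarrow> real) \<Rightarrow> real \<Rightarrow> bool" where
  "frobenius_coords ix U g c e E d \<longleftrightarrow> open U \<and>
    (\<forall>i\<in>{1..CARD('n)}. \<forall>j\<in>{1..CARD('n)}. smooth_on U (g i j)) \<and>
    (\<forall>u\<in>U. invertible (metric_matrix ix g u) \<and>
      (\<forall>i\<in>{1..CARD('n)}. \<forall>j\<in>{1..CARD('n)}. \<forall>k\<in>{1..CARD('n)}. \<forall>l\<in>{1..CARD('n)}.
         g i j u = g j i u \<and>
         riemann ix g l i j k u = 0 \<and>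
         c l j k u = c l k j u \<and>
         (\<Sum>s\<in>{1..CARD('n)}. c s j k u * c l i s u) = (\<Sum>s\<in>{1..CARD('n)}. c s i j u * c l s k u) \<and>
         (\<Sum>s\<in>{1..CARD('n)}. e s u * c l s j u) = (if l = j then 1 else 0) \<and>
         (\<Sum>s\<in>{1..CARD('n)}. g i s u * c s j k u) = (\<Sum>s\<in>{1..CARD('n)}. g j s u * c s i k u) \<and>
         cov_c ix g c i l j k u = cov_c ix g c j l i k u \<and>
         cov_vec ix g e i l u = 0 \<and>
         lie_c ix E c l j k u = c l j k u \<and>
         lie_vec ix E e l u = - e l u \<and>
         lie_metric ix E g i j u = (2 - d) * g i j u))"

definition bidx :: "(nat \<Rightarrow> nat) \<Rightarrow> nat \<Rightarrow> nat \<Rightarrow> nat" where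
  "bidx m \<alpha> j = (\<Sum>\<beta>\<in>{1..<\<alpha>}. m \<beta>) + j"

definition hankel_metric :: "(nat \<Rightarrow> nat) \<Rightarrow> nat \<Rightarrow> (nat \<Rightarrow> real^'n::finite \<Rightarrow> real) \<Rightarrow> nat \<Rightarrow> nat \<Rightarrow> real^'n \<Rightarrow> real" where
  "hankel_metric m r eb i j u = (\<Sum>\<alpha>\<in>{1..r}. \<Sum>a\<in>{1..m \<alpha>}. \<Sum>b\<in>{1..m \<alpha>}.
      if i = bidx m \<alpha> a \<and> j = bidx m \<alpha> b \<and> a + b - 1 \<le> m \<alpha> then eb (bidx m \<alpha> (a + b - 1)) u else 0)"

definition dh_c :: "(nat \<Rightarrow> nat) \<Rightarrow> nat \<Rightarrow> nat \<Rightarrow> nat \<Rightarrow> nat \<Rightarrow> real" where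
  "dh_c m r l j k = (\<Sum>\<alpha>\<in>{1..r}. \<Sum>a\<in>{1..m \<alpha>}. \<Sum>b\<in>{1..m \<alpha>}.
      if j = bidx m \<alpha> a \<and> k = bidx m \<alpha> b \<and> a + b \<le> m \<alpha> + 1 \<and> l = bidx m \<alpha> (a + b - 1) then 1 else 0)"

definition dh_e :: "(nat \<Rightarrow> nat) \<Rightarrow> nat \<Rightarrow> nat \<Rightarrow> real" where
  "dh_e m r s = (if \<exists>\<alpha>\<in>{1..r}. s = bidx m \<alpha> 1 then 1 else 0)"

definition dh_delta :: "(nat \<Rightarrow> nat) \<Rightarrow> nat \<Rightarrow> nat \<Rightarrow> real" where
  "dh_delta m r j = (if \<exists>\<alpha>\<in>{2..r}. j + 2 = bidx m \<alpha> 1 then 1 else 0)"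

text \<open>The map u |-> (z^1,...,z^(n-2)); z^j is stored in component ix (j+2), the
 components ix 1, ix 2 are set to 0.\<close>
definition zmap :: "(nat \<Rightarrow> 'n::finite) \<Rightarrow> (nat \<Rightarrow> nat) \<Rightarrow> nat \<Rightarrow> real^'n \<Rightarrow> real^'n" where
  "zmap ix m r u = (\<Sum>j\<in>{1..CARD('n) - 2}.
      ((u $ ix (j + 2) - dh_delta m r j * u $ ix 1) / u $ ix 2) *\<^sub>R axis (ix (j + 2)) 1)"

definition dz :: "(nat \<Rightarrow> 'n::finite) \<Rightarrow> nat \<Rightarrow> (real^'n \<Rightarrow> real) \<Rightarrow> real^'n \<Rightarrow> real" where
  "dz ix j f = pdv (ix (j + 2)) f"

end

theory Submission
  imports Defs
begin

(* The Frobenius axioms, read in David-Hertling coordinates, give three first-order conditions on the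
   functions eb j (the etabar_j, i.e. the first rows of the Hankel blocks of the metric): the Euler
   equation  sum_s u^s d_s eb_j = -d eb_j,  invariance along the unit field e, and the closedness
   d_i eb_j = d_j eb_i; the last two come from the flatness of e.
   Euler homogeneity together with e-invariance shows that eb_i is |u^2|^(-d) times its value on the
   affine slice {u^1 = p^1, u^2 = p^2}, which the variables z parametrise; this defines F_i.
   On the slice the 1-form  sum_{j>=3} F_j dz^(j-2)  is closed, hence exact on a convex neighbourhood:
   F_j = d f / d z^(j-2).  The function  sum_alpha eb_1(alpha)  has vanishing differential (closedness
   plus e-invariance), which gives F_1, and by the Euler equation it vanishes when d <> 0.
   Finally, the Euler equation restricted to the slice says exactly that
   F_2 + sum_j z^j d f / d z^j + (d - 1) f  has vanishing differential. *)

section \<open>Partial derivatives and smooth functions\<close>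

lemma has_field_derivative_pdv:
  fixes g :: "real^'n::finite \<Rightarrow> real"
  assumes "(\<lambda>t. g (y + t *\<^sub>R axis k 1)) differentiable (at 0)"
  shows "((\<lambda>t. g (y + t *\<^sub>R axis k 1)) has_field_derivative pdv k g y) (at 0)"
  using assms unfolding pdv_def by (simp add: DERIV_deriv_iff_real_differentiable)

lemma has_field_derivative_pdv_shifted:
  fixes g :: "real^'n::finite \<Rightarrow> real"
  assumes "(\<lambda>t. g ((y + s *\<^sub>R axis k 1) + t *\<^sub>R axis k 1)) differentiable (at 0)"
  shows "((\<lambda>t. g (y + t *\<^sub>R axis k 1)) has_field_derivative pdv k g (y + s *\<^sub>R axis k 1)) (at s)"
proof -
  have "(\<lambda>t. g (y + (t + s) *\<^sub>R axis k 1)) = (\<lambda>t. g ((y + s *\<^sub>R axis k 1) + t *\<^sub>R axis k 1))"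
    by (simp add: scaleR_add_left algebra_simps)
  then have "((\<lambda>t. g (y + (t + s) *\<^sub>R axis k 1)) has_field_derivative pdv k g (y + s *\<^sub>R axis k 1)) (at 0)"
    using has_field_derivative_pdv[OF assms] by simp
  then show ?thesis using DERIV_shift[of "\<lambda>t. g (y + t *\<^sub>R axis k 1)" _ 0 s] by simp
qed

lemma pdv_eqI:
  "((\<lambda>t. g (y + t *\<^sub>R axis k 1)) has_field_derivative D) (at 0) \<Longrightarrow> pdv k g y = D"
  unfolding pdv_def by (rule DERIV_imp_deriv)

lemma pdv_coordinate: "pdv k (\<lambda>u::real^'n::finite. u $ j) u = (if j = k then 1 else 0)"
proof -
  have "((\<lambda>t. (u + t *\<^sub>R axis k 1) $ j) has_field_derivative (axis k 1 $ j)) (at 0)"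
    by (auto intro!: derivative_eq_intros)
  then show ?thesis by (simp add: pdv_eqI axis_def)
qed

lemma pdv_const: "pdv k (\<lambda>u::real^'n::finite. c) u = 0"
  by (rule pdv_eqI[OF DERIV_const])

lemma sum_axis_mult: "(\<Sum>i\<in>UNIV. axis k (1::real) $ i * c i) = c k"
proof -
  have "(\<Sum>i\<in>UNIV. axis k (1::real) $ i * c i) = (\<Sum>i\<in>UNIV. if i = k then c i else 0)"
    by (rule sum.cong) (auto simp: axis_def)
  then show ?thesis by simp
qed

lemma coordinate_increment_bound:
  fixes g :: "real^'n::finite \<Rightarrow> real"
  assumes "\<And>s. s \<in> closed_segment 0 h \<Longrightarrow>
      (\<lambda>t. g ((x + s *\<^sub>R axis k 1) + t *\<^sub>R axis k 1)) differentiable (at 0) \<and>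
      \<bar>pdv k g (x + s *\<^sub>R axis k 1) - c\<bar> \<le> \<epsilon>"
  shows "\<bar>g (x + h *\<^sub>R axis k 1) - g x - h * c\<bar> \<le> \<epsilon> * \<bar>h\<bar>"
proof -
  define \<phi> where "\<phi> s = g (x + s *\<^sub>R axis k 1) - s * c" for s
  have "(\<phi> has_field_derivative (pdv k g (x + s *\<^sub>R axis k 1) - c)) (at s within closed_segment 0 h)"
    if "s \<in> closed_segment 0 h" for s
  proof -
    have "((\<lambda>t. g (x + t *\<^sub>R axis k 1)) has_field_derivative pdv k g (x + s *\<^sub>R axis k 1)) (at s)"
      using has_field_derivative_pdv_shifted assms[OF that] by blast
    then have "(\<phi> has_field_derivative (pdv k g (x + s *\<^sub>R axis k 1) - c)) (at s)"
      unfolding \<phi>_def using DERIV_cmult_right[OF DERIV_ident, of c s] by (auto intro: DERIV_diff)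
    then show ?thesis by (rule has_field_derivative_at_within)
  qed
  then have "norm (\<phi> h - \<phi> 0) \<le> \<epsilon> * norm (h - 0)"
  proof (rule field_differentiable_bound[OF convex_closed_segment])
    show "norm (pdv k g (x + s *\<^sub>R axis k 1) - c) \<le> \<epsilon>" if "s \<in> closed_segment 0 h" for s
      using assms[OF that] by simp
  qed auto
  then show ?thesis by (simp add: \<phi>_def)
qed

text \<open>Integrated form of the mean value theorem: walk from \<open>u\<close> to \<open>u + h\<close> one coordinate at a time
  (\<open>hK K\<close> is the part of \<open>h\<close> supported on \<open>K\<close>); every point visited lies within \<open>norm h\<close> of \<open>u\<close>.\<close>

lemma increment_bound_partials:
  fixes g :: "real^'n::finite \<Rightarrow> real"
  assumes near: "\<And>\<xi> k. norm (\<xi> - u) \<le> norm h \<Longrightarrow>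
      (\<lambda>t. g (\<xi> + t *\<^sub>R axis k 1)) differentiable (at 0) \<and> \<bar>pdv k g \<xi> - pdv k g u\<bar> \<le> \<epsilon>"
  shows "\<bar>g (u + h) - g u - (\<Sum>k\<in>UNIV. h$k * pdv k g u)\<bar> \<le> real CARD('n) * \<epsilon> * norm h"
proof -
  define hK where "hK K = (\<Sum>k\<in>K. h$k *\<^sub>R axis k (1::real))" for K
  have hK_nth: "hK K $ i = (if i \<in> K then h$i else 0)" if "finite K" for K i
    using that by (simp add: hK_def sum_component axis_def if_distrib cong: if_cong)
  have hK_step_norm: "norm (hK K + s *\<^sub>R axis k 1) \<le> norm h"
    if "finite K" "k \<notin> K" "\<bar>s\<bar> \<le> \<bar>h$k\<bar>" for K k s
    by (rule norm_le_componentwise_cart) (use that in \<open>auto simp: hK_nth axis_def\<close>)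
  have walk: "\<bar>g (u + hK K) - g u - (\<Sum>k\<in>K. h$k * pdv k g u)\<bar> \<le> real (card K) * \<epsilon> * norm h"
    if "finite K" for K
    using that
  proof (induction K rule: finite_induct)
    case empty then show ?case by (simp add: hK_def)
  next
    case (insert k K)
    have "\<bar>g ((u + hK K) + h$k *\<^sub>R axis k 1) - g (u + hK K) - h$k * pdv k g u\<bar> \<le> \<epsilon> * \<bar>h$k\<bar>"
    proof (rule coordinate_increment_bound)
      fix s assume "s \<in> closed_segment 0 (h$k)"
      then have "\<bar>s\<bar> \<le> \<bar>h$k\<bar>" by (auto simp: closed_segment_eq_real_ivl split: if_splits)
      then have "norm ((u + hK K + s *\<^sub>R axis k 1) - u) \<le> norm h"
        using hK_step_norm[OF insert(1,2)] by (simp add: add.assoc)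
      then show "(\<lambda>t. g ((u + hK K + s *\<^sub>R axis k 1) + t *\<^sub>R axis k 1)) differentiable (at 0) \<and>
          \<bar>pdv k g (u + hK K + s *\<^sub>R axis k 1) - pdv k g u\<bar> \<le> \<epsilon>"
        by (rule near)
    qed
    also have "\<dots> \<le> \<epsilon> * norm h"
      using component_le_norm_cart[of h k] near[of u] by (simp add: mult_left_mono)
    finally have "\<bar>g ((u + hK K) + h$k *\<^sub>R axis k 1) - g (u + hK K) - h$k * pdv k g u\<bar> \<le> \<epsilon> * norm h" .
    moreover have "hK (insert k K) = hK K + h$k *\<^sub>R axis k 1"
      using insert by (simp add: hK_def add.commute)
    ultimately show ?case using insert by (simp add: add.assoc ring_distribs)
  qed
  have "hK UNIV = h"
    by (simp add: hK_def vec_eq_iff sum_component axis_def if_distrib cong: if_cong)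
  with walk[of UNIV] show ?thesis by simp
qed

lemma has_derivative_continuous_partials:
  fixes g :: "real^'n::finite \<Rightarrow> real"
  assumes U: "open U" and u: "u \<in> U"
    and dif: "\<And>k y. y \<in> U \<Longrightarrow> (\<lambda>t. g (y + t *\<^sub>R axis k 1)) differentiable (at 0)"
    and cont: "\<And>k. continuous_on U (pdv k g)"
  shows "(g has_derivative (\<lambda>h. \<Sum>k\<in>UNIV. h$k * pdv k g u)) (at u)"
  unfolding has_derivative_at_alt
proof (intro conjI allI impI)
  show "bounded_linear (\<lambda>h. \<Sum>k\<in>UNIV. h$k * pdv k g u)"
    by (intro bounded_linear_sum bounded_linear_mult_const bounded_linear_vec_nth)
  fix e :: real assume e: "e > 0"
  define \<epsilon> where "\<epsilon> = e / real CARD('n)"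
  have \<epsilon>: "\<epsilon> > 0" using e by (simp add: \<epsilon>_def)
  have "eventually (\<lambda>\<xi>. \<bar>pdv k g \<xi> - pdv k g u\<bar> < \<epsilon>) (nhds u)" for k
  proof -
    have "isCont (pdv k g) u" using cont U u continuous_on_eq_continuous_at by blast
    then have "eventually (\<lambda>\<xi>. dist (pdv k g \<xi>) (pdv k g u) < \<epsilon>) (at u)"
      using \<epsilon> by (auto simp: isCont_def dest!: tendstoD)
    then have "eventually (\<lambda>\<xi>. \<xi> \<noteq> u \<longrightarrow> \<xi> \<in> UNIV \<longrightarrow> dist (pdv k g \<xi>) (pdv k g u) < \<epsilon>) (nhds u)"
      by (simp add: eventually_at_filter)
    then show ?thesis
      by (rule eventually_mono) (use \<epsilon> in \<open>auto simp: dist_real_def\<close>)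
  qed
  then have "eventually (\<lambda>\<xi>. \<xi> \<in> U \<and> (\<forall>k. \<bar>pdv k g \<xi> - pdv k g u\<bar> < \<epsilon>)) (nhds u)"
    using U u eventually_nhds_in_open by (auto simp: eventually_all_finite eventually_conj_iff)
  then obtain \<delta> where \<delta>: "\<delta> > 0"
    and near: "\<And>\<xi>. dist \<xi> u < \<delta> \<Longrightarrow> \<xi> \<in> U \<and> (\<forall>k. \<bar>pdv k g \<xi> - pdv k g u\<bar> < \<epsilon>)"
    unfolding eventually_nhds_metric by blast
  show "\<exists>\<delta>>0. \<forall>y. norm (y - u) < \<delta> \<longrightarrow>
      norm (g y - g u - (\<Sum>k\<in>UNIV. (y - u)$k * pdv k g u)) \<le> e * norm (y - u)"
  proof (intro exI[of _ \<delta>] conjI allI impI \<delta>)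
    fix y assume y: "norm (y - u) < \<delta>"
    have "\<bar>g (u + (y - u)) - g u - (\<Sum>k\<in>UNIV. (y - u)$k * pdv k g u)\<bar> \<le> real CARD('n) * \<epsilon> * norm (y - u)"
    proof (rule increment_bound_partials)
      fix \<xi> k assume "norm (\<xi> - u) \<le> norm (y - u)"
      then have "dist \<xi> u < \<delta>" using y by (simp add: dist_norm)
      then show "(\<lambda>t. g (\<xi> + t *\<^sub>R axis k 1)) differentiable (at 0) \<and> \<bar>pdv k g \<xi> - pdv k g u\<bar> \<le> \<epsilon>"
        using near dif by (auto simp: less_imp_le)
    qed
    then show "norm (g y - g u - (\<Sum>k\<in>UNIV. (y - u)$k * pdv k g u)) \<le> e * norm (y - u)"
      by (simp add: \<epsilon>_def)
  qed
qed

lemma pdv_cong_open: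
  fixes g g' :: "real^'n::finite \<Rightarrow> real"
  assumes W: "open W" and u: "u \<in> W" and eq: "\<forall>w\<in>W. g w = g' w"
    and dif: "(\<lambda>t. g' (u + t *\<^sub>R axis k 1)) differentiable (at 0)"
  shows "(\<lambda>t. g (u + t *\<^sub>R axis k 1)) differentiable (at 0)" and "pdv k g u = pdv k g' u"
proof -
  let ?O = "(\<lambda>t::real. u + t *\<^sub>R axis k 1) -` W"
  have O: "open ?O" "0 \<in> ?O"
    using u by (auto intro!: continuous_open_vimage[OF W] continuous_intros)
  have "((\<lambda>t. g (u + t *\<^sub>R axis k 1)) has_field_derivative pdv k g' u) (at 0)"
    by (rule has_field_derivative_transform_within_open[OF has_field_derivative_pdv[OF dif] O])
      (simp add: eq)
  then show "(\<lambda>t. g (u + t *\<^sub>R axis k 1)) differentiable (at 0)" and "pdv k g u = pdv k g' u"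
    by (auto simp: real_differentiable_def pdv_eqI)
qed

text \<open>Closure of the family under partial derivatives is only required up to equality on \<open>W\<close>.\<close>

lemma smooth_onI:
  fixes h :: "real^'n::finite \<Rightarrow> real"
  assumes W: "open W" and hT: "h \<in> T"
    and T: "\<And>g. g \<in> T \<Longrightarrow> continuous_on W g \<and>
              (\<forall>k. \<forall>u\<in>W. (\<lambda>t. g (u + t *\<^sub>R axis k 1)) differentiable (at 0)) \<and>
              (\<forall>k. \<exists>g'\<in>T. \<forall>w\<in>W. pdv k g w = g' w)"
  shows "smooth_on W h"
  unfolding smooth_on_def
proof (intro exI[of _ "{g. \<exists>g'\<in>T. \<forall>w\<in>W. g w = g' w}"] conjI ballI allI)
  show "h \<in> {g. \<exists>g'\<in>T. \<forall>w\<in>W. g w = g' w}" using hT by blast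
next
  fix g assume "g \<in> {g. \<exists>g'\<in>T. \<forall>w\<in>W. g w = g' w}"
  then obtain g' where g': "g' \<in> T" "\<forall>w\<in>W. g w = g' w" by blast
  note Tg = T[OF g'(1)]
  show "continuous_on W g" using continuous_on_cong[OF refl, of W g g'] g'(2) Tg by simp
  show "(\<lambda>t. g (u + t *\<^sub>R axis k 1)) differentiable (at 0)" if "u \<in> W" for k u
    using pdv_cong_open(1)[OF W that g'(2)] Tg that by blast
  fix k
  obtain g'' where g'': "g'' \<in> T" "\<forall>w\<in>W. pdv k g' w = g'' w" using Tg by blast
  have "pdv k g w = g'' w" if "w \<in> W" for w
    using pdv_cong_open(2)[OF W that g'(2)] Tg that g''(2) by auto
  then show "(\<lambda>u. pdv k g u) \<in> {g. \<exists>g'\<in>T. \<forall>w\<in>W. g w = g' w}" using g''(1) by blast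
qed

lemma
  assumes "smooth_on U g"
  shows smooth_on_continuous: "continuous_on U g"
    and smooth_on_line_differentiable:
      "u \<in> U \<Longrightarrow> (\<lambda>t. g (u + t *\<^sub>R axis k 1)) differentiable (at 0)"
    and smooth_on_pdv: "smooth_on U (pdv k g)"
  using assms unfolding smooth_on_def by blast+

lemma smooth_on_has_derivative:
  fixes g :: "real^'n::finite \<Rightarrow> real"
  assumes "open U" "smooth_on U g" "u \<in> U"
  shows "(g has_derivative (\<lambda>h. \<Sum>k\<in>UNIV. h$k * pdv k g u)) (at u)"
  using assms
  by (intro has_derivative_continuous_partials)
    (auto intro: smooth_on_line_differentiable smooth_on_continuous[OF smooth_on_pdv])

lemma smooth_on_has_field_derivative_line:
  fixes g :: "real^'n::finite \<Rightarrow> real"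
  assumes "open W" "smooth_on W g" "p + x *\<^sub>R v \<in> W"
  shows "((\<lambda>x. g (p + x *\<^sub>R v)) has_field_derivative (\<Sum>i\<in>UNIV. v$i * pdv i g (p + x *\<^sub>R v))) (at x within S)"
proof -
  have "((\<lambda>x. p + x *\<^sub>R v) has_derivative (\<lambda>h. h *\<^sub>R v)) (at x within S)"
    by (auto intro!: derivative_eq_intros)
  from this smooth_on_has_derivative[OF assms]
  have "((\<lambda>x. g (p + x *\<^sub>R v)) has_derivative
      (\<lambda>h. \<Sum>k\<in>UNIV. (h *\<^sub>R v)$k * pdv k g (p + x *\<^sub>R v))) (at x within S)"
    by (rule has_derivative_compose)
  moreover have "(\<lambda>h. \<Sum>k\<in>UNIV. (h *\<^sub>R v)$k * pdv k g (p + x *\<^sub>R v))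
      = (*) (\<Sum>i\<in>UNIV. v$i * pdv i g (p + x *\<^sub>R v))"
    by (rule ext) (simp add: sum_distrib_left mult_ac)
  ultimately show ?thesis unfolding has_field_derivative_def by simp
qed

lemma smooth_on_if_smooth_partials:
  fixes f :: "real^'n::finite \<Rightarrow> real"
  assumes W: "open W"
    and dif: "\<And>k w. w \<in> W \<Longrightarrow> (\<lambda>t. f (w + t *\<^sub>R axis k 1)) differentiable (at 0)"
    and partial: "\<And>k w. w \<in> W \<Longrightarrow> pdv k f w = \<Phi> k w"
    and smooth: "\<And>k. smooth_on W (\<Phi> k)"
  shows "smooth_on W f"
proof (rule smooth_onI[OF W, of f "insert f {g. smooth_on W g}"])
  fix g assume "g \<in> insert f {g. smooth_on W g}"
  then show "continuous_on W g \<and> (\<forall>k. \<forall>u\<in>W. (\<lambda>t. g (u + t *\<^sub>R axis k 1)) differentiable (at 0))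
      \<and> (\<forall>k. \<exists>g'\<in>insert f {g. smooth_on W g}. \<forall>w\<in>W. pdv k g w = g' w)"
  proof
    assume f: "g = f"
    have "continuous_on W (pdv k f)" for k
      using continuous_on_cong[OF refl, of W "pdv k f" "\<Phi> k"] partial smooth_on_continuous[OF smooth]
      by auto
    then have "continuous_on W f"
      using has_derivative_continuous_partials[OF W _ dif] has_derivative_continuous
      by (blast intro: continuous_at_imp_continuous_on)
    then show ?thesis using f dif partial smooth by blast
  qed (blast intro: smooth_on_continuous smooth_on_line_differentiable smooth_on_pdv)
qed simp

lemma has_field_derivative_compose_axis_scaling:
  fixes g :: "real^'n::finite \<Rightarrow> real" and \<sigma> :: "real^'n \<Rightarrow> real^'n"
  assumes shift: "\<And>w k t. \<sigma> (w + t *\<^sub>R axis k 1) = \<sigma> w + (a k * t) *\<^sub>R axis k 1"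
    and dif: "(\<lambda>t. g (\<sigma> w + t *\<^sub>R axis k 1)) differentiable (at 0)"
  shows "((\<lambda>t. c * g (\<sigma> (w + t *\<^sub>R axis k 1))) has_field_derivative c * a k * pdv k g (\<sigma> w)) (at 0)"
proof -
  have "((\<lambda>s. g (\<sigma> w + s *\<^sub>R axis k 1)) has_field_derivative pdv k g (\<sigma> w)) (at (a k * 0))"
    using has_field_derivative_pdv[OF dif] by simp
  moreover have "((\<lambda>t. a k * t) has_field_derivative a k) (at 0)"
    using DERIV_cmult_right[OF DERIV_ident, of "a k" 0] by simp
  ultimately have "((\<lambda>t. g (\<sigma> w + (a k * t) *\<^sub>R axis k 1)) has_field_derivative pdv k g (\<sigma> w) * a k) (at 0)"
    by (rule DERIV_chain2)
  then have "((\<lambda>t. c * g (\<sigma> w + (a k * t) *\<^sub>R axis k 1)) has_field_derivative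
      c * (pdv k g (\<sigma> w) * a k)) (at 0)"
    by (rule DERIV_cmult)
  then show ?thesis unfolding shift by (simp add: mult_ac)
qed

lemma
  fixes g :: "real^'n::finite \<Rightarrow> real" and \<sigma> :: "real^'n \<Rightarrow> real^'n"
  assumes W: "open W" and \<sigma>W: "\<And>w. w \<in> W \<Longrightarrow> \<sigma> w \<in> U" and cont: "continuous_on W \<sigma>"
    and shift: "\<And>w k t. \<sigma> (w + t *\<^sub>R axis k 1) = \<sigma> w + (a k * t) *\<^sub>R axis k 1"
    and g: "smooth_on U g"
  shows pdv_compose_axis_scaling:
      "w \<in> W \<Longrightarrow> pdv k (\<lambda>w. c * g (\<sigma> w)) w = c * a k * pdv k g (\<sigma> w)"
    and smooth_on_compose_axis_scaling: "smooth_on W (\<lambda>w. c * g (\<sigma> w))"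
proof -
  note deriv = has_field_derivative_compose_axis_scaling[OF shift smooth_on_line_differentiable[OF _ \<sigma>W]]
  have pdv: "pdv k (\<lambda>w. c' * g' (\<sigma> w)) w = c' * a k * pdv k g' (\<sigma> w)"
    if "smooth_on U g'" "w \<in> W" for c' g' w k
    by (rule pdv_eqI) (rule deriv[OF that])
  then show "w \<in> W \<Longrightarrow> pdv k (\<lambda>w. c * g (\<sigma> w)) w = c * a k * pdv k g (\<sigma> w)"
    using g by blast
  let ?T = "{h. \<exists>c g. smooth_on U g \<and> h = (\<lambda>w. c * g (\<sigma> w))}"
  show "smooth_on W (\<lambda>w. c * g (\<sigma> w))"
  proof (rule smooth_onI[OF W, of _ ?T])
    fix h assume "h \<in> ?T"
    then obtain c' g' where g': "smooth_on U g'" and h: "h = (\<lambda>w. c' * g' (\<sigma> w))" by blast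
    have "continuous_on W h"
      unfolding h using \<sigma>W
      by (intro continuous_intros continuous_on_compose2[OF smooth_on_continuous[OF g'] cont]) auto
    moreover have "(\<lambda>t. h (u + t *\<^sub>R axis k 1)) differentiable (at 0)" if "u \<in> W" for k u
      using deriv[OF g' that] unfolding h real_differentiable_def by blast
    moreover have "\<exists>h'\<in>?T. \<forall>w\<in>W. pdv k h w = h' w" for k
    proof
      show "(\<lambda>w. (c' * a k) * pdv k g' (\<sigma> w)) \<in> ?T" using smooth_on_pdv[OF g'] by blast
    qed (use pdv[OF g'] h in simp)
    ultimately show "continuous_on W h \<and> (\<forall>k. \<forall>u\<in>W. (\<lambda>t. h (u + t *\<^sub>R axis k 1)) differentiable (at 0))
        \<and> (\<forall>k. \<exists>h'\<in>?T. \<forall>w\<in>W. pdv k h w = h' w)" by blast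
  qed (use g in blast)
qed

section \<open>Potentials of closed forms on convex sets\<close>

definition radial_potential :: "real^'n::finite \<Rightarrow> ('n \<Rightarrow> real^'n \<Rightarrow> real) \<Rightarrow> real^'n \<Rightarrow> real" where
  "radial_potential a \<Phi> w = integral (cbox 0 1) (\<lambda>t. \<Sum>j\<in>UNIV. (w - a)$j * \<Phi> j (a + t *\<^sub>R (w - a)))"

lemma has_field_derivative_radial_integrand:
  fixes \<Phi> :: "'n::finite \<Rightarrow> real^'n \<Rightarrow> real"
  assumes W: "open W" and sm: "\<And>j. smooth_on W (\<Phi> j)"
    and y: "a + t *\<^sub>R (c + x *\<^sub>R axis k 1) \<in> W"
  shows "((\<lambda>x. \<Sum>j\<in>UNIV. (c + x *\<^sub>R axis k 1)$j * \<Phi> j (a + t *\<^sub>R (c + x *\<^sub>R axis k 1)))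
    has_field_derivative
      \<Phi> k (a + t *\<^sub>R (c + x *\<^sub>R axis k 1)) +
      t * (\<Sum>j\<in>UNIV. (c + x *\<^sub>R axis k 1)$j * pdv k (\<Phi> j) (a + t *\<^sub>R (c + x *\<^sub>R axis k 1)))) (at x within S)"
    (is "(_ has_field_derivative _) _")
proof -
  define e where "e = (axis k 1 :: real^'n)"
  define y where "y x = a + t *\<^sub>R (c + x *\<^sub>R e)" for x
  have y_line: "y x' = (a + t *\<^sub>R c) + x' *\<^sub>R (t *\<^sub>R e)" for x'
    by (simp add: y_def algebra_simps)
  have "((\<lambda>x. \<Phi> j (y x)) has_field_derivative t * pdv k (\<Phi> j) (y x)) (at x within S)" for j
  proof -
    have "((\<lambda>x. \<Phi> j ((a + t *\<^sub>R c) + x *\<^sub>R (t *\<^sub>R e))) has_field_derivative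
        (\<Sum>i\<in>UNIV. (t *\<^sub>R e)$i * pdv i (\<Phi> j) (y x))) (at x within S)"
      unfolding y_line by (rule smooth_on_has_field_derivative_line[OF W sm])
        (use y in \<open>simp add: y_def e_def algebra_simps\<close>)
    moreover have "(\<Sum>i\<in>UNIV. (t *\<^sub>R e)$i * pdv i (\<Phi> j) (y x)) = t * pdv k (\<Phi> j) (y x)"
      using sum_axis_mult[of k "\<lambda>i. t * pdv i (\<Phi> j) (y x)"] by (simp add: e_def mult_ac)
    ultimately show ?thesis by (simp add: y_line)
  qed
  then have "((\<lambda>x. \<Sum>j\<in>UNIV. (c + x *\<^sub>R e)$j * \<Phi> j (y x)) has_field_derivative
      (\<Sum>j\<in>UNIV. e$j * \<Phi> j (y x) + (c + x *\<^sub>R e)$j * (t * pdv k (\<Phi> j) (y x)))) (at x within S)"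
    by (auto intro!: DERIV_sum derivative_eq_intros)
  moreover have "(\<Sum>j\<in>UNIV. e$j * \<Phi> j (y x) + (c + x *\<^sub>R e)$j * (t * pdv k (\<Phi> j) (y x)))
      = \<Phi> k (y x) + t * (\<Sum>j\<in>UNIV. (c + x *\<^sub>R e)$j * pdv k (\<Phi> j) (y x))"
    unfolding sum.distrib e_def sum_axis_mult by (simp add: sum_distrib_left mult_ac)
  ultimately show ?thesis by (simp add: y_def e_def)
qed

lemma radial_integral_closed_form:
  fixes \<Phi> :: "'n::finite \<Rightarrow> real^'n \<Rightarrow> real"
  assumes W: "open W" "convex W" "a \<in> W" "w \<in> W"
    and sm: "\<And>j. smooth_on W (\<Phi> j)"
    and closed: "\<And>i j w. w \<in> W \<Longrightarrow> pdv i (\<Phi> j) w = pdv j (\<Phi> i) w"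
  shows "integral (cbox 0 1) (\<lambda>t. \<Phi> k (a + t *\<^sub>R (w - a)) +
      t * (\<Sum>j\<in>UNIV. (w - a)$j * pdv k (\<Phi> j) (a + t *\<^sub>R (w - a)))) = \<Phi> k w"
proof -
  have onW: "a + t *\<^sub>R (w - a) \<in> W" if "t \<in> {0..1}" for t
    using convexD_alt[OF W(2,3,4), of t] that by (simp add: algebra_simps)
  \<comment> \<open>the integrand is the derivative of \<open>t \<Phi>\<^sub>k(a + t(w - a))\<close>, by closedness\<close>
  have "((\<lambda>t. t * \<Phi> k (a + t *\<^sub>R (w - a))) has_vector_derivative
      \<Phi> k (a + t *\<^sub>R (w - a)) + t * (\<Sum>j\<in>UNIV. (w - a)$j * pdv k (\<Phi> j) (a + t *\<^sub>R (w - a))))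
      (at t within {0..1})" if t: "t \<in> {0..1}" for t
  proof -
    have "((\<lambda>t. \<Phi> k (a + t *\<^sub>R (w - a))) has_field_derivative
        (\<Sum>j\<in>UNIV. (w - a)$j * pdv j (\<Phi> k) (a + t *\<^sub>R (w - a)))) (at t within {0..1})"
      by (rule smooth_on_has_field_derivative_line[OF W(1) sm onW[OF t]])
    then show ?thesis
      using closed[OF onW[OF t]]
      by (auto intro!: derivative_eq_intros simp: has_real_derivative_iff_has_vector_derivative[symmetric])
  qed
  then have "((\<lambda>t. \<Phi> k (a + t *\<^sub>R (w - a)) +
      t * (\<Sum>j\<in>UNIV. (w - a)$j * pdv k (\<Phi> j) (a + t *\<^sub>R (w - a)))) has_integral \<Phi> k w) {0..1}"
    using fundamental_theorem_of_calculus[of 0 1] by fastforce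
  then show ?thesis by (simp add: cbox_interval integral_unique)
qed

lemma convex_vimage_line:
  fixes W :: "'a::real_vector set"
  assumes "convex W"
  shows "convex ((\<lambda>x::real. w + x *\<^sub>R e) -` W)"
proof (rule convexI)
  fix x x' u v :: real
  assume "x \<in> (\<lambda>x. w + x *\<^sub>R e) -` W" "x' \<in> (\<lambda>x. w + x *\<^sub>R e) -` W" "0 \<le> u" "0 \<le> v" "u + v = 1"
  then have "u *\<^sub>R (w + x *\<^sub>R e) + v *\<^sub>R (w + x' *\<^sub>R e) \<in> W" using convexD[OF assms] by simp
  moreover have "u *\<^sub>R (w + x *\<^sub>R e) + v *\<^sub>R (w + x' *\<^sub>R e) = (u + v) *\<^sub>R w + (u * x + v * x') *\<^sub>R e"
    by (simp add: algebra_simps)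
  ultimately show "u *\<^sub>R x + v *\<^sub>R x' \<in> (\<lambda>x. w + x *\<^sub>R e) -` W" using \<open>u + v = 1\<close> by simp
qed

lemma has_field_derivative_radial_potential:
  fixes \<Phi> :: "'n::finite \<Rightarrow> real^'n \<Rightarrow> real"
  assumes W: "open W" "convex W" "a \<in> W" "w \<in> W"
    and sm: "\<And>j. smooth_on W (\<Phi> j)"
    and closed: "\<And>i j w. w \<in> W \<Longrightarrow> pdv i (\<Phi> j) w = pdv j (\<Phi> i) w"
  shows "((\<lambda>x. radial_potential a \<Phi> (w + x *\<^sub>R axis k 1)) has_field_derivative \<Phi> k w) (at 0)"
proof -
  define c where "c = w - a"
  define e where "e = (axis k 1 :: real^'n)"
  define L where "L = (\<lambda>x::real. w + x *\<^sub>R e) -` W"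
  define y where "y x t = a + t *\<^sub>R (c + x *\<^sub>R e)" for x t :: real
  define g where "g x t = (\<Sum>j\<in>UNIV. (c + x *\<^sub>R e)$j * \<Phi> j (y x t))" for x t
  define g' where "g' x t = \<Phi> k (y x t) + t * (\<Sum>j\<in>UNIV. (c + x *\<^sub>R e)$j * pdv k (\<Phi> j) (y x t))"
    for x t
  have L: "open L" "convex L" "0 \<in> L"
    using W(4) convex_vimage_line[OF W(2)] unfolding L_def
    by (auto intro!: continuous_open_vimage[OF W(1)] continuous_intros)
  have yW: "y x t \<in> W" if "x \<in> L" "t \<in> cbox 0 1" for x t
    using convexD_alt[OF W(2,3), of "w + x *\<^sub>R e" t] that
    by (simp add: L_def y_def c_def algebra_simps cbox_interval)
  have cont_Phi: "continuous_on W (\<Phi> j)" "continuous_on W (pdv k (\<Phi> j))" for j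
    using smooth_on_continuous smooth_on_pdv sm by blast+
  have cont_y: "continuous_on (L \<times> cbox 0 1) (\<lambda>z. y (fst z) (snd z))"
    unfolding y_def by (intro continuous_intros)
  have y_img: "(\<lambda>z. y (fst z) (snd z)) ` (L \<times> cbox 0 1) \<subseteq> W" using yW by auto
  have "((\<lambda>x. integral (cbox 0 1) (g x)) has_field_derivative integral (cbox 0 1) (g' 0)) (at 0 within L)"
  proof (rule leibniz_rule_field_derivative[OF _ _ _ L(3,2)])
    show "((\<lambda>x. g x t) has_field_derivative g' x t) (at x within L)"
      if "x \<in> L" "t \<in> cbox 0 1" for x t
      unfolding g_def g'_def y_def e_def
      by (rule has_field_derivative_radial_integrand[OF W(1) sm]) (use yW that in \<open>simp add: y_def e_def\<close>)
    show "g x integrable_on cbox 0 1" if "x \<in> L" for x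
    proof (rule integrable_continuous)
      have "continuous_on (cbox 0 1) (\<lambda>t. \<Phi> j (y x t))" for j
        by (rule continuous_on_compose2[OF cont_Phi(1)]) (use yW that in \<open>auto simp: y_def intro!: continuous_intros\<close>)
      then show "continuous_on (cbox 0 1) (g x)" unfolding g_def by (intro continuous_intros)
    qed
    show "continuous_on (L \<times> cbox 0 1) (\<lambda>(x, t). g' x t)"
      unfolding case_prod_beta g'_def
      by (intro continuous_intros continuous_on_compose2[OF cont_Phi(1) cont_y y_img]
          continuous_on_compose2[OF cont_Phi(2) cont_y y_img])
  qed
  moreover have "integral (cbox 0 1) (g' 0) = \<Phi> k w"
    using radial_integral_closed_form[OF W sm closed] by (simp add: g'_def[abs_def] y_def c_def)
  moreover have "radial_potential a \<Phi> (w + x *\<^sub>R axis k 1) = integral (cbox 0 1) (g x)" for x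
  proof -
    have "w + x *\<^sub>R axis k 1 - a = c + x *\<^sub>R e" by (simp add: c_def e_def algebra_simps)
    then show ?thesis by (simp add: radial_potential_def g_def[abs_def] y_def)
  qed
  ultimately show ?thesis using at_within_open[OF L(3,1)] by simp
qed

lemma
  fixes \<Phi> :: "'n::finite \<Rightarrow> real^'n \<Rightarrow> real"
  assumes W: "open W" "convex W" "a \<in> W"
    and sm: "\<And>j. smooth_on W (\<Phi> j)"
    and closed: "\<And>i j w. w \<in> W \<Longrightarrow> pdv i (\<Phi> j) w = pdv j (\<Phi> i) w"
  shows pdv_radial_potential: "w \<in> W \<Longrightarrow> pdv k (radial_potential a \<Phi>) w = \<Phi> k w"
    and smooth_on_radial_potential: "smooth_on W (radial_potential a \<Phi>)"
proof -
  note deriv = has_field_derivative_radial_potential[OF W _ sm closed]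
  show "w \<in> W \<Longrightarrow> pdv k (radial_potential a \<Phi>) w = \<Phi> k w" for w k
    by (rule pdv_eqI[OF deriv])
  moreover have "(\<lambda>t. radial_potential a \<Phi> (w + t *\<^sub>R axis k 1)) differentiable (at 0)" if "w \<in> W" for w k
    using deriv[OF that] real_differentiable_def by blast
  ultimately show "smooth_on W (radial_potential a \<Phi>)"
    by (intro smooth_on_if_smooth_partials[OF W(1) _ _ sm])
qed

section \<open>Homogeneous functions\<close>

lemma euler_invariant_directional_derivative:
  fixes g :: "real^'n::finite \<Rightarrow> real"
  assumes euler: "(\<Sum>k\<in>UNIV. y$k * pdv k g y) = - d * g y"
    and inv: "(\<Sum>k\<in>UNIV. e$k * pdv k g y) = 0"
  shows "(\<Sum>k\<in>UNIV. (a *\<^sub>R y + b *\<^sub>R e)$k * pdv k g y) = - a * d * g y"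
proof -
  have "(\<Sum>k\<in>UNIV. (a *\<^sub>R y + b *\<^sub>R e)$k * pdv k g y)
      = a * (\<Sum>k\<in>UNIV. y$k * pdv k g y) + b * (\<Sum>k\<in>UNIV. e$k * pdv k g y)"
    by (simp add: algebra_simps sum.distrib sum_distrib_left)
  then show ?thesis using euler inv by simp
qed

text \<open>A function satisfying the Euler equation of degree \<open>-d\<close> and invariant along \<open>e\<close> scales like
  \<open>\<rho> powr (-d)\<close>: \<open>l(t) powr d \<cdot> g(y(t))\<close> is constant along the segment \<open>y(t)\<close> from \<open>u\<close> to
  \<open>\<rho>u + \<mu>e\<close>, where \<open>y(t) = l(t) u + t\<mu> e\<close>.\<close>

lemma euler_homogeneous_scaling:
  fixes g :: "real^'n::finite \<Rightarrow> real"
  assumes U: "open U" "smooth_on U g"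
    and euler: "\<And>y. y \<in> U \<Longrightarrow> (\<Sum>k\<in>UNIV. y$k * pdv k g y) = - d * g y"
    and inv: "\<And>y. y \<in> U \<Longrightarrow> (\<Sum>k\<in>UNIV. e$k * pdv k g y) = 0"
    and rho: "\<rho> > 0"
    and seg: "closed_segment u (\<rho> *\<^sub>R u + \<mu> *\<^sub>R e) \<subseteq> U"
  shows "g (\<rho> *\<^sub>R u + \<mu> *\<^sub>R e) = \<rho> powr (- d) * g u"
proof -
  define v where "v = (\<rho> - 1) *\<^sub>R u + \<mu> *\<^sub>R e"
  define l where "l t = 1 + t * (\<rho> - 1)" for t :: real
  define h where "h t = l t powr d * g (u + t *\<^sub>R v)" for t
  have "(h has_field_derivative 0) (at t within {0..1})" if t: "t \<in> {0..1}" for t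
  proof -
    have "l t = (1 - t) + t * \<rho>" by (simp add: l_def algebra_simps)
    also have "\<dots> > 0" using t rho by (cases "t = 0") (auto intro: add_nonneg_pos)
    finally have l_pos: "l t > 0" .
    have yU: "u + t *\<^sub>R v \<in> U"
      using seg t by (auto simp: closed_segment_def v_def algebra_simps intro!: exI[of _ t])
    define D where "D = (\<Sum>i\<in>UNIV. v$i * pdv i g (u + t *\<^sub>R v))"
    have lv: "(\<rho> - 1) *\<^sub>R (u + t *\<^sub>R v) + \<mu> *\<^sub>R e = l t *\<^sub>R v"
      by (simp add: v_def l_def algebra_simps)
    have "l t * D = (\<Sum>i\<in>UNIV. (l t *\<^sub>R v)$i * pdv i g (u + t *\<^sub>R v))"
      by (simp add: D_def sum_distrib_left mult.assoc)
    also have "\<dots> = - (\<rho> - 1) * d * g (u + t *\<^sub>R v)"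
      unfolding lv[symmetric] by (rule euler_invariant_directional_derivative[OF euler[OF yU] inv[OF yU]])
    finally have "l t * D = - (\<rho> - 1) * d * g (u + t *\<^sub>R v)" .
    moreover have "l t powr d * D + d * l t powr (d - 1) * (\<rho> - 1) * g (u + t *\<^sub>R v)
        = l t powr (d - 1) * (l t * D + (\<rho> - 1) * d * g (u + t *\<^sub>R v))"
      using l_pos by (simp add: powr_diff field_simps)
    ultimately have zero: "l t powr d * D + d * l t powr (d - 1) * (\<rho> - 1) * g (u + t *\<^sub>R v) = 0"
      by (simp add: algebra_simps)
    have dg: "((\<lambda>t. g (u + t *\<^sub>R v)) has_field_derivative D) (at t)"
      unfolding D_def by (rule smooth_on_has_field_derivative_line[OF U yU])
    have dl: "((\<lambda>t. l t powr d) has_field_derivative d * l t powr (d - 1) * (\<rho> - 1)) (at t)"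
      using l_pos by (auto simp: l_def intro!: derivative_eq_intros)
    have "(h has_field_derivative 0) (at t)"
      unfolding h_def using DERIV_mult'[OF dl dg] by (simp only: zero)
    then show ?thesis by (rule has_field_derivative_at_within)
  qed
  then obtain c where "\<forall>t\<in>{0..1}. h t = c"
    using has_field_derivative_zero_constant[OF convex_real_interval(5)] by blast
  then have "h 1 = h 0" by simp
  then have "\<rho> powr d * g (\<rho> *\<^sub>R u + \<mu> *\<^sub>R e) = g u"
    by (simp add: h_def l_def v_def algebra_simps)
  then show ?thesis using rho by (simp add: powr_minus_divide field_simps)
qed

section \<open>Block indices and the block-Hankel metric\<close>

lemma bidx_first_block [simp]: "bidx m (Suc 0) a = a"
  by (simp add: bidx_def)

locale blocks =
  fixes m :: "nat \<Rightarrow> nat" and r :: nat and n :: nat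
  assumes r: "r \<ge> 1" and m_pos: "\<forall>\<alpha>\<in>{1..r}. m \<alpha> \<ge> 1" and m_sum: "(\<Sum>\<alpha>\<in>{1..r}. m \<alpha>) = n"
begin

definition offset :: "nat \<Rightarrow> nat" where "offset \<alpha> = (\<Sum>\<beta>\<in>{1..<\<alpha>}. m \<beta>)"

lemma bidx_offset: "bidx m \<alpha> a = offset \<alpha> + a"
  by (simp add: bidx_def offset_def)

lemma offset_Suc: "\<alpha> \<ge> 1 \<Longrightarrow> offset (Suc \<alpha>) = offset \<alpha> + m \<alpha>"
  by (simp add: offset_def)

lemma offset_mono: "\<alpha> \<le> \<beta> \<Longrightarrow> offset \<alpha> \<le> offset \<beta>"
  unfolding offset_def by (rule sum_mono2) auto

lemma offset_last: "offset (Suc r) = n"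
  using m_sum atLeastLessThanSuc_atLeastAtMost by (simp add: offset_def)

lemma offset_block_end_le: "\<alpha> \<in> {1..r} \<Longrightarrow> \<alpha> < \<beta> \<Longrightarrow> offset \<alpha> + m \<alpha> \<le> offset \<beta>"
  using offset_mono[of "Suc \<alpha>" \<beta>] offset_Suc[of \<alpha>] by simp

lemma bidx_in_range: "\<alpha> \<in> {1..r} \<Longrightarrow> a \<in> {1..m \<alpha>} \<Longrightarrow> bidx m \<alpha> a \<in> {1..n}"
  using offset_mono[of "Suc \<alpha>" "Suc r"] offset_Suc[of \<alpha>] offset_last by (auto simp: bidx_offset)

lemma bidx_inject:
  assumes "\<alpha> \<in> {1..r}" "a \<in> {1..m \<alpha>}" "\<beta> \<in> {1..r}" "b \<in> {1..m \<beta>}"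
  shows "bidx m \<alpha> a = bidx m \<beta> b \<longleftrightarrow> \<alpha> = \<beta> \<and> a = b"
proof
  assume eq: "bidx m \<alpha> a = bidx m \<beta> b"
  have "\<not> \<alpha> < \<beta>" using offset_block_end_le[of \<alpha> \<beta>] eq assms by (auto simp: bidx_offset)
  moreover have "\<not> \<beta> < \<alpha>" using offset_block_end_le[of \<beta> \<alpha>] eq assms by (auto simp: bidx_offset)
  ultimately show "\<alpha> = \<beta> \<and> a = b" using eq by (simp add: bidx_offset)
qed simp

lemma bidx_cases:
  assumes "j \<in> {1..n}"
  obtains \<alpha> a where "\<alpha> \<in> {1..r}" "a \<in> {1..m \<alpha>}" "j = bidx m \<alpha> a"
proof -
  define S where "S = {\<beta>\<in>{1..r}. offset \<beta> < j}"
  define \<alpha> where "\<alpha> = Max S"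
  have "finite S" "1 \<in> S" using assms r by (simp_all add: S_def offset_def)
  then have "\<alpha> \<in> S" unfolding \<alpha>_def using Max_in[of S] by blast
  then have \<alpha>: "\<alpha> \<in> {1..r}" "offset \<alpha> < j" by (simp_all add: S_def)
  have \<alpha>_max: "\<beta> \<le> \<alpha>" if "\<beta> \<in> {1..r}" "offset \<beta> < j" for \<beta>
    unfolding \<alpha>_def using \<open>finite S\<close> that by (intro Max_ge) (simp_all add: S_def)
  have "j \<le> offset (Suc \<alpha>)"
  proof (rule ccontr)
    assume j: "\<not> j \<le> offset (Suc \<alpha>)"
    then have "\<alpha> \<noteq> r" using assms offset_last by auto
    then show False using \<alpha>_max[of "Suc \<alpha>"] \<alpha> j by auto
  qed
  then have "j - offset \<alpha> \<in> {1..m \<alpha>}" "j = bidx m \<alpha> (j - offset \<alpha>)"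
    using \<alpha> offset_Suc[of \<alpha>] by (auto simp: bidx_offset)
  with \<alpha>(1) show thesis by (rule that)
qed

lemma hankel_metric_bidx:
  assumes \<alpha>: "\<alpha> \<in> {1..r}" "a \<in> {1..m \<alpha>}" and \<beta>: "\<beta> \<in> {1..r}" "b \<in> {1..m \<beta>}"
  shows "hankel_metric m r eb (bidx m \<alpha> a) (bidx m \<beta> b) u =
    (if \<alpha> = \<beta> \<and> a + b - 1 \<le> m \<alpha> then eb (bidx m \<alpha> (a + b - 1)) u else 0)"
    (is "_ = ?X")
proof -
  have "hankel_metric m r eb (bidx m \<alpha> a) (bidx m \<beta> b) u =
      (\<Sum>\<gamma>\<in>{1..r}. \<Sum>c\<in>{1..m \<gamma>}. \<Sum>c'\<in>{1..m \<gamma>}. if \<gamma> = \<alpha> \<and> c = a \<and> c' = b then ?X else 0)"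
    unfolding hankel_metric_def
  proof (intro sum.cong refl)
    fix \<gamma> c c' assume "\<gamma> \<in> {1..r}" "c \<in> {1..m \<gamma>}" "c' \<in> {1..m \<gamma>}"
    then have cond: "(bidx m \<alpha> a = bidx m \<gamma> c \<and> bidx m \<beta> b = bidx m \<gamma> c' \<and> c + c' - 1 \<le> m \<gamma>) \<longleftrightarrow>
        \<gamma> = \<alpha> \<and> c = a \<and> c' = b \<and> \<alpha> = \<beta> \<and> a + b - 1 \<le> m \<alpha>"
      using bidx_inject \<alpha> \<beta> by blast
    show "(if bidx m \<alpha> a = bidx m \<gamma> c \<and> bidx m \<beta> b = bidx m \<gamma> c' \<and> c + c' - 1 \<le> m \<gamma>
        then eb (bidx m \<gamma> (c + c' - 1)) u else 0) = (if \<gamma> = \<alpha> \<and> c = a \<and> c' = b then ?X else 0)"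
      by (simp only: cond) auto
  qed
  also have "\<dots> = ?X"
  proof (cases "\<alpha> = \<beta>")
    case True
    have "(\<Sum>c'\<in>{1..m \<gamma>}. if \<gamma> = \<alpha> \<and> c = a \<and> c' = b then ?X else 0) = (if \<gamma> = \<alpha> \<and> c = a then ?X else 0)"
      for \<gamma> c using True \<beta> by (cases "\<gamma> = \<alpha> \<and> c = a") (simp, auto intro!: sum.neutral)
    moreover have "(\<Sum>c\<in>{1..m \<gamma>}. if \<gamma> = \<alpha> \<and> c = a then ?X else 0) = (if \<gamma> = \<alpha> then ?X else 0)"
      for \<gamma> using \<alpha> by (cases "\<gamma> = \<alpha>") simp_all
    ultimately show ?thesis using \<alpha> by simp
  qed simp
  finally show ?thesis .
qed

lemma one_in_block: "\<alpha> \<in> {1..r} \<Longrightarrow> 1 \<in> {1..m \<alpha>}"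
  using m_pos by auto

lemma bidx_first_in_range: "\<alpha> \<in> {1..r} \<Longrightarrow> bidx m \<alpha> 1 \<in> {1..n}"
  using bidx_in_range one_in_block by blast

lemma bidx_first_inject: "\<alpha> \<in> {1..r} \<Longrightarrow> \<beta> \<in> {1..r} \<Longrightarrow> bidx m \<alpha> 1 = bidx m \<beta> 1 \<longleftrightarrow> \<alpha> = \<beta>"
  using bidx_inject one_in_block by blast

lemma hankel_metric_first_row:
  assumes "\<alpha> \<in> {1..r}" "\<beta> \<in> {1..r}" "b \<in> {1..m \<beta>}"
  shows "hankel_metric m r eb (bidx m \<alpha> 1) (bidx m \<beta> b) = (if \<alpha> = \<beta> then eb (bidx m \<beta> b) else (\<lambda>u. 0))"
  using hankel_metric_bidx[OF assms(1) one_in_block[OF assms(1)] assms(2,3)] assms by (auto simp: fun_eq_iff)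

lemma hankel_metric_sym:
  assumes "i \<in> {1..n}" "j \<in> {1..n}"
  shows "hankel_metric m r eb i j = hankel_metric m r eb j i"
proof -
  obtain \<alpha> a \<beta> b where "\<alpha> \<in> {1..r}" "a \<in> {1..m \<alpha>}" "i = bidx m \<alpha> a"
    and "\<beta> \<in> {1..r}" "b \<in> {1..m \<beta>}" "j = bidx m \<beta> b"
    using bidx_cases[OF assms(1)] bidx_cases[OF assms(2)] by metis
  then show ?thesis by (auto simp: hankel_metric_bidx add.commute)
qed

lemma sum_dh_e: "(\<Sum>s\<in>{1..n}. dh_e m r s * X s) = (\<Sum>\<alpha>\<in>{1..r}. X (bidx m \<alpha> 1))"
proof -
  have "(\<Sum>s\<in>{1..n}. dh_e m r s * X s) = (\<Sum>s\<in>(\<lambda>\<alpha>. bidx m \<alpha> 1) ` {1..r}. X s)"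
    using bidx_first_in_range by (intro sum.mono_neutral_cong_right) (auto simp: dh_e_def)
  also have "\<dots> = (\<Sum>\<alpha>\<in>{1..r}. X (bidx m \<alpha> 1))"
    by (rule sum.reindex_cong[OF _ refl refl]) (use bidx_first_inject in \<open>auto intro!: inj_onI\<close>)
  finally show ?thesis .
qed

end

section \<open>The Frobenius conditions in David--Hertling coordinates\<close>

lemma bij_betw_ix_inv_into:
  "bij_betw ix {1..CARD('n::finite)} (UNIV::'n set) \<Longrightarrow> k \<in> {1..CARD('n)} \<Longrightarrow> inv_into {1..CARD('n)} ix (ix k) = k"
  by (simp add: bij_betw_def inv_into_f_f)

lemma bij_betw_ix_eq_iff:
  "bij_betw ix {1..CARD('n::finite)} (UNIV::'n set) \<Longrightarrow> k \<in> {1..CARD('n)} \<Longrightarrow> j \<in> {1..CARD('n)} \<Longrightarrow>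
    ix k = ix j \<longleftrightarrow> k = j"
  unfolding bij_betw_def inj_on_def by blast

lemma bij_betw_ix_sum:
  "bij_betw ix {1..CARD('n::finite)} (UNIV::'n set) \<Longrightarrow> (\<Sum>z\<in>UNIV. f z) = (\<Sum>k\<in>{1..CARD('n)}. f (ix k))"
  using sum.reindex_bij_betw[of ix _ UNIV f] by simp

lemma cpd_coordinate:
  assumes "bij_betw ix {1..CARD('n::finite)} (UNIV::'n set)" "i \<in> {1..CARD('n)}" "s \<in> {1..CARD('n)}"
  shows "cpd ix i (\<lambda>u::real^'n. u $ ix s) u = (if s = i then 1 else 0)"
  using bij_betw_ix_eq_iff[OF assms(1), of s i] assms by (simp add: cpd_def pdv_coordinate)

lemma inv_metric_right_inverse:
  assumes ix: "bij_betw ix {1..CARD('n::finite)} (UNIV::'n set)"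
    and inv: "invertible (metric_matrix ix g u)"
    and k: "k \<in> {1..CARD('n)}" and j: "j \<in> {1..CARD('n)}"
  shows "(\<Sum>l\<in>{1..CARD('n)}. g k l u * inv_metric ix g l j u) = (if k = j then 1 else 0)"
proof -
  define A where "A = metric_matrix ix g u"
  have "A ** matrix_inv A = mat 1"
    using someI_ex[OF inv[unfolded invertible_def]] unfolding matrix_inv_def A_def by blast
  then have "mat 1 $ ix k $ ix j = (A ** matrix_inv A) $ ix k $ ix j" by simp
  also have "\<dots> = (\<Sum>z\<in>UNIV. A $ ix k $ z * matrix_inv A $ z $ ix j)"
    by (simp add: matrix_matrix_mult_def)
  also have "\<dots> = (\<Sum>l\<in>{1..CARD('n)}. A $ ix k $ ix l * matrix_inv A $ ix l $ ix j)"
    by (rule bij_betw_ix_sum[OF ix])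
  also have "\<dots> = (\<Sum>l\<in>{1..CARD('n)}. g k l u * inv_metric ix g l j u)"
    using k bij_betw_ix_inv_into[OF ix]
    by (intro sum.cong refl) (simp add: A_def metric_matrix_def inv_metric_def)
  finally show ?thesis using bij_betw_ix_eq_iff[OF ix k j] by (simp add: mat_def)
qed

lemma lie_metric_coordinate_field:
  assumes ix: "bij_betw ix {1..CARD('n::finite)} (UNIV::'n set)"
    and "i \<in> {1..CARD('n)}" "j \<in> {1..CARD('n)}"
  shows "lie_metric ix (\<lambda>s u. u $ ix s) g i j u
    = (\<Sum>s\<in>{1..CARD('n)}. u $ ix s * cpd ix s (g i j) u) + 2 * g i j u"
proof -
  have "lie_metric ix (\<lambda>s u. u $ ix s) g i j u = (\<Sum>s\<in>{1..CARD('n)}. u $ ix s * cpd ix s (g i j) u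
      + (if s = i then g s j u else 0) + (if s = j then g i s u else 0))"
    unfolding lie_metric_def using assms by (intro sum.cong refl) (simp add: cpd_coordinate)
  then show ?thesis using assms by (simp add: sum.distrib)
qed

text \<open>For a constant vector field \<open>v\<close>, \<open>\<nabla>v = 0\<close> says \<open>\<Gamma>\<^sup>l\<^sub>i\<^sub>s v\<^sup>s = 0\<close>; lowering the index \<open>l\<close> with the
  metric turns this into a condition on first derivatives of the metric alone.\<close>

lemma parallel_constant_field_lowered:
  assumes ix: "bij_betw ix {1..CARD('n::finite)} (UNIV::'n set)"
    and inv: "invertible (metric_matrix ix g u)"
    and i: "i \<in> {1..CARD('n)}" and k: "k \<in> {1..CARD('n)}"
    and parallel: "\<And>l. l \<in> {1..CARD('n)} \<Longrightarrow> cov_vec ix g (\<lambda>s u. v s) i l u = 0"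
  shows "(\<Sum>s\<in>{1..CARD('n)}. v s * (cpd ix i (g s k) u + cpd ix s (g i k) u - cpd ix k (g i s) u)) = 0"
proof -
  define N where "N = {1..CARD('n)}"
  define T where "T s q = cpd ix i (g s q) u + cpd ix s (g i q) u - cpd ix q (g i s) u" for s q
  have "(\<Sum>s\<in>N. christoffel ix g l i s u * v s) = 0" if "l \<in> N" for l
    using parallel[of l] that by (simp add: cov_vec_def cpd_def pdv_const N_def)
  then have "0 = (\<Sum>l\<in>N. g k l u * (\<Sum>s\<in>N. christoffel ix g l i s u * v s))" by simp
  also have "\<dots> = (\<Sum>l\<in>N. \<Sum>s\<in>N. \<Sum>q\<in>N. (1/2) * v s * (g k l u * inv_metric ix g l q u) * T s q)"
    by (simp add: christoffel_def N_def T_def sum_distrib_left sum_distrib_right mult_ac)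
  also have "\<dots> = (\<Sum>s\<in>N. \<Sum>l\<in>N. \<Sum>q\<in>N. (1/2) * v s * (g k l u * inv_metric ix g l q u) * T s q)"
    by (rule sum.swap)
  also have "\<dots> = (\<Sum>s\<in>N. \<Sum>q\<in>N. \<Sum>l\<in>N. (1/2) * v s * (g k l u * inv_metric ix g l q u) * T s q)"
    by (intro sum.cong refl sum.swap)
  also have "\<dots> = (\<Sum>s\<in>N. \<Sum>q\<in>N. (1/2) * v s * (\<Sum>l\<in>N. g k l u * inv_metric ix g l q u) * T s q)"
    by (simp add: sum_distrib_left sum_distrib_right)
  also have "\<dots> = (\<Sum>s\<in>N. (1/2) * v s * T s k)"
  proof (intro sum.cong refl)
    fix s
    have "(\<Sum>q\<in>N. (1/2) * v s * (\<Sum>l\<in>N. g k l u * inv_metric ix g l q u) * T s q)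
        = (\<Sum>q\<in>N. if k = q then (1/2) * v s * T s q else 0)"
    proof (intro sum.cong refl)
      fix q assume "q \<in> N"
      then have "(\<Sum>l\<in>N. g k l u * inv_metric ix g l q u) = (if k = q then 1 else 0)"
        using inv_metric_right_inverse[OF ix inv k] by (simp add: N_def)
      then show "(1/2) * v s * (\<Sum>l\<in>N. g k l u * inv_metric ix g l q u) * T s q
          = (if k = q then (1/2) * v s * T s q else 0)" by simp
    qed
    then show "(\<Sum>q\<in>N. (1/2) * v s * (\<Sum>l\<in>N. g k l u * inv_metric ix g l q u) * T s q) = (1/2) * v s * T s k"
      using k by (simp add: N_def)
  qed
  also have "\<dots> = (1/2) * (\<Sum>s\<in>N. v s * T s k)" by (simp add: sum_distrib_left mult.assoc)
  finally show ?thesis by (simp add: T_def N_def)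
qed

locale dh_frobenius = blocks m r "CARD('n)"
  for m :: "nat \<Rightarrow> nat" and r :: nat +
  fixes ix :: "nat \<Rightarrow> 'n::finite" and U :: "(real^'n) set"
    and eb :: "nat \<Rightarrow> real^'n \<Rightarrow> real" and d :: real
  assumes ix: "bij_betw ix {1..CARD('n)} UNIV"
    and frob: "frobenius_coords ix U (hankel_metric m r eb) (\<lambda>l j k u. dh_c m r l j k)
                 (\<lambda>s u. dh_e m r s) (\<lambda>s u. u $ ix s) d"
begin

abbreviation "eta \<equiv> hankel_metric m r eb"

lemma open_U: "open U"
  using frob by (simp add: frobenius_coords_def)

lemma metric_invertible: "u \<in> U \<Longrightarrow> invertible (metric_matrix ix eta u)"
  using frob by (simp add: frobenius_coords_def)

lemma eb_first_row:
  assumes "j \<in> {1..CARD('n)}"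
  obtains \<beta> where "\<beta> \<in> {1..r}" "eb j = eta (bidx m \<beta> 1) j"
  using bidx_cases[OF assms] hankel_metric_first_row by (metis (full_types))

lemma smooth_on_eta: "i \<in> {1..CARD('n)} \<Longrightarrow> j \<in> {1..CARD('n)} \<Longrightarrow> smooth_on U (eta i j)"
  using frob by (simp add: frobenius_coords_def)

lemma lie_eta:
  "u \<in> U \<Longrightarrow> i \<in> {1..CARD('n)} \<Longrightarrow> j \<in> {1..CARD('n)} \<Longrightarrow>
    lie_metric ix (\<lambda>s u. u $ ix s) eta i j u = (2 - d) * eta i j u"
  using frob by (simp add: frobenius_coords_def)

lemma unit_parallel:
  "u \<in> U \<Longrightarrow> i \<in> {1..CARD('n)} \<Longrightarrow> l \<in> {1..CARD('n)} \<Longrightarrow>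
    cov_vec ix eta (\<lambda>s u. dh_e m r s) i l u = 0"
  using frob by (simp add: frobenius_coords_def)

lemma smooth_on_eb: "j \<in> {1..CARD('n)} \<Longrightarrow> smooth_on U (eb j)"
  by (metis eb_first_row smooth_on_eta bidx_first_in_range)

lemma euler_eb:
  assumes u: "u \<in> U" and j: "j \<in> {1..CARD('n)}"
  shows "(\<Sum>s\<in>{1..CARD('n)}. u $ ix s * cpd ix s (eb j) u) = - d * eb j u"
proof -
  obtain \<beta> where \<beta>: "\<beta> \<in> {1..r}" and eb: "eb j = eta (bidx m \<beta> 1) j" by (rule eb_first_row[OF j])
  show ?thesis
    using lie_eta[OF u bidx_first_in_range[OF \<beta>] j] lie_metric_coordinate_field[OF ix bidx_first_in_range[OF \<beta>] j] eb by (simp add: algebra_simps)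
qed

lemma sum_first_row_cpd:
  assumes "k \<in> {1..CARD('n)}"
  shows "(\<Sum>\<alpha>\<in>{1..r}. cpd ix i (eta (bidx m \<alpha> 1) k) u) = cpd ix i (eb k) u"
proof -
  obtain \<beta> b where \<beta>: "\<beta> \<in> {1..r}" "b \<in> {1..m \<beta>}" "k = bidx m \<beta> b"
    by (rule bidx_cases[OF assms])
  have "(\<Sum>\<alpha>\<in>{1..r}. cpd ix i (eta (bidx m \<alpha> 1) k) u) = (\<Sum>\<alpha>\<in>{1..r}. if \<alpha> = \<beta> then cpd ix i (eb k) u else 0)"
  proof (intro sum.cong refl)
    fix \<alpha> assume "\<alpha> \<in> {1..r}"
    then show "cpd ix i (eta (bidx m \<alpha> 1) k) u = (if \<alpha> = \<beta> then cpd ix i (eb k) u else 0)"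
      using hankel_metric_first_row[OF _ \<beta>(1,2), of \<alpha> eb] \<beta>(3) by (simp add: cpd_def pdv_const)
  qed
  then show ?thesis using \<beta>(1) by simp
qed

text \<open>\<open>\<nabla>e = 0\<close> lowered with the metric; the first-row entries \<open>eta (bidx m \<alpha> 1) k\<close> are \<open>eb k\<close> or \<open>0\<close>.\<close>

lemma unit_flat_relation:
  assumes u: "u \<in> U" and i: "i \<in> {1..CARD('n)}" and k: "k \<in> {1..CARD('n)}"
  shows "cpd ix i (eb k) u + (\<Sum>\<alpha>\<in>{1..r}. cpd ix (bidx m \<alpha> 1) (eta i k) u) - cpd ix k (eb i) u = 0"
proof -
  have "(\<Sum>\<alpha>\<in>{1..r}. cpd ix i (eta (bidx m \<alpha> 1) k) u + cpd ix (bidx m \<alpha> 1) (eta i k) u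
      - cpd ix k (eta i (bidx m \<alpha> 1)) u) = 0"
    using parallel_constant_field_lowered[OF ix metric_invertible[OF u] i k, of "dh_e m r",
        unfolded sum_dh_e] unit_parallel[OF u i] by blast
  moreover have "eta i (bidx m \<alpha> 1) = eta (bidx m \<alpha> 1) i" if "\<alpha> \<in> {1..r}" for \<alpha>
    using hankel_metric_sym[OF i bidx_first_in_range[OF that]] .
  ultimately show ?thesis
    using sum_first_row_cpd[OF i, of k u] sum_first_row_cpd[OF k, of i u]
    by (simp add: sum.distrib sum_subtractf)
qed

lemma sum_unit_cpd_eta_eq_0:
  assumes "u \<in> U" "i \<in> {1..CARD('n)}" "k \<in> {1..CARD('n)}"
  shows "(\<Sum>\<alpha>\<in>{1..r}. cpd ix (bidx m \<alpha> 1) (eta i k) u) = 0"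
proof -
  have "eta k i = eta i k" by (rule hankel_metric_sym[OF assms(3,2)])
  then show ?thesis using unit_flat_relation[OF assms] unit_flat_relation[OF assms(1,3,2)] by simp
qed

lemma cpd_eb_sym:
  assumes "u \<in> U" "i \<in> {1..CARD('n)}" "j \<in> {1..CARD('n)}"
  shows "cpd ix i (eb j) u = cpd ix j (eb i) u"
  using unit_flat_relation[OF assms] sum_unit_cpd_eta_eq_0[OF assms] by simp

lemma unit_invariant_eb:
  assumes "u \<in> U" "j \<in> {1..CARD('n)}"
  shows "(\<Sum>\<alpha>\<in>{1..r}. cpd ix (bidx m \<alpha> 1) (eb j) u) = 0"
proof -
  obtain \<beta> where "\<beta> \<in> {1..r}" "eb j = eta (bidx m \<beta> 1) j" by (rule eb_first_row[OF assms(2)])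
  then show ?thesis using sum_unit_cpd_eta_eq_0[OF assms(1) bidx_first_in_range assms(2)] by simp
qed

end

section \<open>The normal form near a point\<close>

locale dh_frobenius_point = dh_frobenius m r ix U eb d
  for m r and ix :: "nat \<Rightarrow> 'n::finite" and U eb d +
  fixes p :: "real^'n"
  assumes m1: "m 1 \<ge> 2" and pU: "p \<in> U" and u2_nonzero: "\<And>u. u \<in> U \<Longrightarrow> u $ ix 2 \<noteq> 0"
begin

lemma card_ge_2: "CARD('n) \<ge> 2"
  using m1 m_sum member_le_sum[of 1 "{1..r}" m] r by simp

lemma ix_1_neq_ix_2 [simp]: "ix (Suc 0) \<noteq> ix 2" "ix 2 \<noteq> ix (Suc 0)"
  using bij_betw_ix_eq_iff[OF ix, of 1 2] card_ge_2 by auto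

lemma ix_ge_3_neq:
  assumes "i \<in> {1..CARD('n)}" "3 \<le> i"
  shows "ix i \<noteq> ix 1" "ix i \<noteq> ix 2"
  using bij_betw_ix_eq_iff[OF ix assms(1), of 1] bij_betw_ix_eq_iff[OF ix assms(1), of 2] assms card_ge_2
  by auto

lemma inv_into_ix: "inv_into {1..CARD('n)} ix k \<in> {1..CARD('n)}" "ix (inv_into {1..CARD('n)} ix k) = k"
proof -
  have "k \<in> ix ` {1..CARD('n)}" using ix by (simp add: bij_betw_def)
  then show "inv_into {1..CARD('n)} ix k \<in> {1..CARD('n)}" "ix (inv_into {1..CARD('n)} ix k) = k"
    by (rule inv_into_into, rule f_inv_into_f)
qed

lemma bidx_first_ge_3: "\<alpha> \<in> {2..r} \<Longrightarrow> bidx m \<alpha> 1 \<ge> 3"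
  using offset_mono[of 2 \<alpha>] offset_Suc[of 1] m1 by (simp add: bidx_offset offset_def numeral_2_eq_2)

lemma bidx_first_neq_2: "\<alpha> \<in> {1..r} \<Longrightarrow> bidx m \<alpha> 1 \<noteq> 2"
  using bidx_first_ge_3[of \<alpha>] by (cases "\<alpha> = 1") auto

definition unit_vec :: "real^'n" where
  "unit_vec = (\<Sum>\<alpha>\<in>{1..r}. axis (ix (bidx m \<alpha> 1)) 1)"

lemma sum_unit_vec: "(\<Sum>k\<in>UNIV. unit_vec $ k * X k) = (\<Sum>\<alpha>\<in>{1..r}. X (ix (bidx m \<alpha> 1)))"
proof -
  have "(\<Sum>k\<in>UNIV. unit_vec $ k * X k) = (\<Sum>\<alpha>\<in>{1..r}. \<Sum>k\<in>UNIV. axis (ix (bidx m \<alpha> 1)) 1 $ k * X k)"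
    by (simp add: unit_vec_def sum_component sum_distrib_right sum.swap[of _ UNIV])
  then show ?thesis by (simp only: sum_axis_mult)
qed

lemma unit_vec_nth: "i \<in> {1..CARD('n)} \<Longrightarrow> unit_vec $ ix i = dh_e m r i"
proof -
  assume i: "i \<in> {1..CARD('n)}"
  have "unit_vec $ ix i = (\<Sum>\<alpha>\<in>{1..r}. if bidx m \<alpha> 1 = i then 1 else 0)"
    using bij_betw_ix_eq_iff[OF ix i bidx_first_in_range]
    by (simp add: unit_vec_def sum_component axis_def) (intro sum.cong refl, auto)
  also have "\<dots> = (\<Sum>s\<in>{1..CARD('n)}. dh_e m r s * (if s = i then 1 else 0))"
    by (simp only: sum_dh_e)
  finally show ?thesis using i by (simp add: if_distrib cong: if_cong)
qed

lemma unit_vec_1: "unit_vec $ ix 1 = 1" and unit_vec_2: "unit_vec $ ix 2 = 0"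
  using unit_vec_nth[of 1] unit_vec_nth[of 2] card_ge_2 r bidx_first_neq_2
  by (auto simp: dh_e_def intro!: bexI[of _ 1])

lemma euler_eb_pdv:
  "y \<in> U \<Longrightarrow> j \<in> {1..CARD('n)} \<Longrightarrow> (\<Sum>k\<in>UNIV. y $ k * pdv k (eb j) y) = - d * eb j y"
  using euler_eb bij_betw_ix_sum[OF ix, of "\<lambda>k. y $ k * pdv k (eb j) y"] by (simp add: cpd_def)

lemma unit_invariant_eb_pdv:
  "y \<in> U \<Longrightarrow> j \<in> {1..CARD('n)} \<Longrightarrow> (\<Sum>k\<in>UNIV. unit_vec $ k * pdv k (eb j) y) = 0"
  using unit_invariant_eb by (simp add: sum_unit_vec cpd_def)

lemma pdv_eb_sym:
  "y \<in> U \<Longrightarrow> i \<in> {1..CARD('n)} \<Longrightarrow> j \<in> {1..CARD('n)} \<Longrightarrow> pdv (ix i) (eb j) y = pdv (ix j) (eb i) y"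
  using cpd_eb_sym by (simp add: cpd_def)

definition eb_first_sum :: "real^'n \<Rightarrow> real" where
  "eb_first_sum u = (\<Sum>\<alpha>\<in>{1..r}. eb (bidx m \<alpha> 1) u)"

lemma sum_pdv_eb_first_eq_0:
  assumes y: "y \<in> U"
  shows "(\<Sum>\<alpha>\<in>{1..r}. pdv k (eb (bidx m \<alpha> 1)) y) = 0"
proof -
  obtain i where i: "i \<in> {1..CARD('n)}" "k = ix i" using inv_into_ix by metis
  have "(\<Sum>\<alpha>\<in>{1..r}. pdv k (eb (bidx m \<alpha> 1)) y) = (\<Sum>\<alpha>\<in>{1..r}. pdv (ix (bidx m \<alpha> 1)) (eb i) y)"
    using pdv_eb_sym[OF y bidx_first_in_range i(1)] i(2) by simp
  also have "\<dots> = 0" using unit_invariant_eb[OF y i(1)] by (simp add: cpd_def)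
  finally show ?thesis .
qed

lemma has_derivative_eb_first_sum: "u \<in> U \<Longrightarrow> (eb_first_sum has_derivative (\<lambda>h. 0)) (at u)"
proof -
  assume u: "u \<in> U"
  have "(eb_first_sum has_derivative (\<lambda>h. \<Sum>\<alpha>\<in>{1..r}. \<Sum>k\<in>UNIV. h$k * pdv k (eb (bidx m \<alpha> 1)) u)) (at u)"
    unfolding eb_first_sum_def[abs_def]
    by (intro has_derivative_sum smooth_on_has_derivative[OF open_U _ u] smooth_on_eb bidx_first_in_range)
  moreover have "(\<Sum>\<alpha>\<in>{1..r}. \<Sum>k\<in>UNIV. h$k * pdv k (eb (bidx m \<alpha> 1)) u)
      = (\<Sum>k\<in>UNIV. h$k * (\<Sum>\<alpha>\<in>{1..r}. pdv k (eb (bidx m \<alpha> 1)) u))" for h :: "real^'n"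
    unfolding sum_distrib_left by (rule sum.swap)
  ultimately show ?thesis using sum_pdv_eb_first_eq_0[OF u] by simp
qed

lemma eb_first_sum_euler: "u \<in> U \<Longrightarrow> d * eb_first_sum u = 0"
proof -
  assume u: "u \<in> U"
  have "- (d * eb_first_sum u) = (\<Sum>\<alpha>\<in>{1..r}. \<Sum>k\<in>UNIV. u $ k * pdv k (eb (bidx m \<alpha> 1)) u)"
    using euler_eb_pdv[OF u bidx_first_in_range]
    by (simp add: eb_first_sum_def sum_distrib_left sum_negf)
  also have "\<dots> = (\<Sum>k\<in>UNIV. u$k * (\<Sum>\<alpha>\<in>{1..r}. pdv k (eb (bidx m \<alpha> 1)) u))"
    unfolding sum_distrib_left by (rule sum.swap)
  also have "\<dots> = 0" using sum_pdv_eb_first_eq_0[OF u] by simp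
  finally show ?thesis by simp
qed

definition p1 :: real where "p1 = p $ ix 1"
definition p2 :: real where "p2 = p $ ix 2"

lemma p2_nonzero: "p2 \<noteq> 0"
  using u2_nonzero[OF pU] by (simp add: p2_def)

text \<open>\<open>z_indicator\<close> marks the coordinates \<open>u\<^sup>3, \<dots>, u\<^sup>n\<close>, which carry the variables \<open>z\<^sup>j\<close> (stored, like in
  \<open>zmap\<close>, at position \<open>ix (j + 2)\<close>). The map \<open>slice\<close> inverts \<open>zmap\<close> on the slice
  \<open>u\<^sup>1 = p\<^sup>1, u\<^sup>2 = p\<^sup>2\<close>: \<open>u\<^sup>j\<^sup>+\<^sup>2 = p\<^sup>2 z\<^sup>j + \<delta>\<^sub>j p\<^sup>1\<close>, and the \<open>\<delta>\<^sub>j\<close> are the components of \<open>e\<close>.\<close>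

definition z_indicator :: "'n \<Rightarrow> real" where
  "z_indicator k = (if k = ix 1 \<or> k = ix 2 then 0 else 1)"

definition slice :: "real^'n \<Rightarrow> real^'n" where
  "slice w = (\<chi> k. p2 * z_indicator k * w $ k) + p1 *\<^sub>R unit_vec + p2 *\<^sub>R axis (ix 2) 1"

lemma slice_nth:
  "slice w $ k = p2 * z_indicator k * w $ k + p1 * unit_vec $ k + (if k = ix 2 then p2 else 0)"
  by (simp add: slice_def axis_def)

lemma slice_shift:
  "slice (w + t *\<^sub>R axis k 1) = slice w + (p2 * z_indicator k * t) *\<^sub>R axis k 1"
  by (simp add: vec_eq_iff slice_nth axis_def algebra_simps)

lemma slice_affine: "a + b = 1 \<Longrightarrow> slice (a *\<^sub>R x + b *\<^sub>R y) = a *\<^sub>R slice x + b *\<^sub>R slice y"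
proof -
  assume "a + b = 1"
  then have b: "b = 1 - a" by simp
  show ?thesis unfolding vec_eq_iff b by (simp add: slice_nth algebra_simps)
qed

lemma continuous_on_slice: "continuous_on S slice"
  unfolding slice_def by (intro continuous_intros)

lemma zmap_nth:
  assumes i: "i \<in> {1..CARD('n)}"
  shows "zmap ix m r u $ ix i =
    (if 3 \<le> i then (u $ ix i - dh_delta m r (i - 2) * u $ ix 1) / u $ ix 2 else 0)"
proof -
  have "zmap ix m r u $ ix i = (\<Sum>j\<in>{1..CARD('n) - 2}.
      if j = i - 2 \<and> 3 \<le> i then (u $ ix (j + 2) - dh_delta m r j * u $ ix 1) / u $ ix 2 else 0)"
    unfolding zmap_def sum_component
  proof (intro sum.cong refl)
    fix j assume "j \<in> {1..CARD('n) - 2}"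
    then have "ix i = ix (j + 2) \<longleftrightarrow> j = i - 2 \<and> 3 \<le> i"
      using bij_betw_ix_eq_iff[OF ix i, of "j + 2"] card_ge_2 by auto
    then show "(((u $ ix (j + 2) - dh_delta m r j * u $ ix 1) / u $ ix 2) *\<^sub>R axis (ix (j + 2)) 1) $ ix i =
        (if j = i - 2 \<and> 3 \<le> i then (u $ ix (j + 2) - dh_delta m r j * u $ ix 1) / u $ ix 2 else 0)"
      by (auto simp: axis_def)
  qed
  also have "\<dots> = (if 3 \<le> i then (u $ ix (i - 2 + 2) - dh_delta m r (i - 2) * u $ ix 1) / u $ ix 2 else 0)"
    using i by (auto simp: sum.delta')
  also have "\<dots> = (if 3 \<le> i then (u $ ix i - dh_delta m r (i - 2) * u $ ix 1) / u $ ix 2 else 0)"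
  proof (cases "3 \<le> i")
    case True
    then have "i - 2 + 2 = i" by simp
    then show ?thesis by (simp only: if_True True)
  qed simp
  finally show ?thesis .
qed

lemma dh_delta_unit_vec:
  assumes i: "i \<in> {1..CARD('n)}" and i3: "3 \<le> i"
  shows "dh_delta m r (i - 2) = unit_vec $ ix i"
proof -
  have "(\<exists>\<alpha>\<in>{2..r}. i = bidx m \<alpha> 1) \<longleftrightarrow> (\<exists>\<alpha>\<in>{1..r}. i = bidx m \<alpha> 1)"
    using i3 by (metis One_nat_def atLeastAtMost_iff bidx_first_block le_antisym not_less_eq_eq
        numeral_2_eq_2 numeral_3_eq_3 nat_le_linear)
  moreover have "i - 2 + 2 = i" using i3 by simp
  ultimately show ?thesis by (simp add: dh_delta_def unit_vec_nth[OF i] dh_e_def)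
qed

lemma slice_zmap:
  assumes u: "u $ ix 2 \<noteq> 0"
  shows "slice (zmap ix m r u) = (p2 / u $ ix 2) *\<^sub>R u + (p1 - (p2 / u $ ix 2) * u $ ix 1) *\<^sub>R unit_vec"
  unfolding vec_eq_iff
proof
  fix k
  obtain i where i: "i \<in> {1..CARD('n)}" "k = ix i" using inv_into_ix by metis
  have "1 \<le> i" using i(1) by simp
  then consider "i = 1" | "i = 2" | "3 \<le> i" by linarith
  then show "slice (zmap ix m r u) $ k = ((p2 / u $ ix 2) *\<^sub>R u + (p1 - (p2 / u $ ix 2) * u $ ix 1) *\<^sub>R unit_vec) $ k"
  proof cases
    case 3
    then show ?thesis using i u ix_ge_3_neq[OF i(1) 3]
      by (simp add: slice_nth z_indicator_def zmap_nth dh_delta_unit_vec field_simps)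
  qed (use i u unit_vec_1 unit_vec_2 in \<open>simp_all add: slice_nth z_indicator_def algebra_simps\<close>)
qed

definition R :: real where "R = (SOME R. R > 0 \<and> ball p R \<subseteq> U)"

lemma R: "R > 0" "ball p R \<subseteq> U"
proof -
  have "\<exists>R. R > 0 \<and> ball p R \<subseteq> U" using open_U pU open_contains_ball by blast
  then show "R > 0" "ball p R \<subseteq> U" unfolding R_def by (metis (mono_tags, lifting) someI_ex)+
qed

definition W :: "(real^'n) set" where "W = slice -` ball p R"

definition V :: "(real^'n) set" where
  "V = {u \<in> ball p R. u $ ix 2 * p2 > 0 \<and> slice (zmap ix m r u) \<in> ball p R}"

definition a0 :: "real^'n" where "a0 = zmap ix m r p"

lemma slice_a0: "slice a0 = p"
  using slice_zmap[of p] p2_nonzero by (simp add: a0_def p1_def p2_def)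

lemma open_W: "open W"
  unfolding W_def
  by (rule continuous_open_vimage[OF open_ball]) (use continuous_on_slice[of UNIV] in \<open>simp add: continuous_on_eq_continuous_at\<close>)

lemma convex_W: "convex W"
  unfolding W_def using convex_ball[of p R] by (auto simp: convex_def slice_affine)

lemma a0_in_W: "a0 \<in> W"
  using slice_a0 R by (simp add: W_def)

lemma slice_in_U: "w \<in> W \<Longrightarrow> slice w \<in> U"
  using R by (auto simp: W_def)

lemma open_V: "open V"
proof -
  define D where "D = {u::real^'n. u $ ix 2 * p2 > 0}"
  have "continuous_on D (zmap ix m r)"
    unfolding zmap_def[abs_def] D_def by (intro continuous_intros) auto
  then have "continuous_on D (slice \<circ> zmap ix m r)"
    using continuous_on_compose continuous_on_slice by blast
  then have "open (D \<inter> (slice \<circ> zmap ix m r) -` ball p R)"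
    by (rule continuous_open_preimage) (auto simp: D_def intro!: open_Collect_less continuous_intros)
  moreover have "V = ball p R \<inter> (D \<inter> (slice \<circ> zmap ix m r) -` ball p R)" by (auto simp: V_def D_def)
  ultimately show ?thesis by auto
qed

lemma p_in_V: "p \<in> V"
proof -
  have "p $ ix 2 * p $ ix 2 > 0" using p2_nonzero not_real_square_gt_zero unfolding p2_def by blast
  then show ?thesis using slice_a0 R by (simp add: V_def a0_def p2_def)
qed

lemma V_subset_U: "V \<subseteq> U"
  using R by (auto simp: V_def)

lemma zmap_V_subset_W: "zmap ix m r ` V \<subseteq> W"
  by (auto simp: V_def W_def)

definition c0 :: real where "c0 = \<bar>p2\<bar> powr d"

definition F :: "nat \<Rightarrow> real^'n \<Rightarrow> real" where "F i w = c0 * eb i (slice w)"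

text \<open>The 1-form \<open>\<Sum>\<^sub>j\<^sub>\<ge>\<^sub>3 F\<^sub>j dz\<^sup>j\<^sup>-\<^sup>2\<close>, with vanishing components along \<open>ix 1\<close> and \<open>ix 2\<close>.\<close>

definition omega :: "'n \<Rightarrow> real^'n \<Rightarrow> real" where
  "omega k w = c0 * z_indicator k * eb (inv_into {1..CARD('n)} ix k) (slice w)"

definition f :: "real^'n \<Rightarrow> real" where "f = radial_potential a0 omega"

lemma
  assumes "smooth_on U g"
  shows pdv_slice:
      "w \<in> W \<Longrightarrow> pdv k (\<lambda>w. c * g (slice w)) w = c * (p2 * z_indicator k) * pdv k g (slice w)"
    and smooth_on_slice: "smooth_on W (\<lambda>w. c * g (slice w))"
  using pdv_compose_axis_scaling[OF open_W slice_in_U continuous_on_slice slice_shift assms]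
    smooth_on_compose_axis_scaling[OF open_W slice_in_U continuous_on_slice slice_shift assms]
  by blast+

lemma smooth_on_F: "i \<in> {1..CARD('n)} \<Longrightarrow> smooth_on W (F i)"
  unfolding F_def[abs_def] by (intro smooth_on_slice smooth_on_eb)

lemma pdv_F: "w \<in> W \<Longrightarrow> i \<in> {1..CARD('n)} \<Longrightarrow>
    pdv k (F i) w = c0 * p2 * z_indicator k * pdv k (eb i) (slice w)"
  unfolding F_def[abs_def] by (simp add: pdv_slice smooth_on_eb mult_ac)

lemma omega_eq: "omega k = (\<lambda>w. (c0 * z_indicator k) * eb (inv_into {1..CARD('n)} ix k) (slice w))"
  by (simp add: omega_def[abs_def])

lemma smooth_on_omega: "smooth_on W (omega k)"
  unfolding omega_eq by (intro smooth_on_slice smooth_on_eb inv_into_ix)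

lemma pdv_omega: "w \<in> W \<Longrightarrow> pdv i (omega k) w =
    c0 * p2 * z_indicator k * z_indicator i * pdv i (eb (inv_into {1..CARD('n)} ix k)) (slice w)"
  using pdv_slice[OF smooth_on_eb[OF inv_into_ix(1)], of w i "c0 * z_indicator k" k]
  unfolding omega_eq by (simp add: mult_ac)

lemma omega_closed: "w \<in> W \<Longrightarrow> pdv i (omega k) w = pdv k (omega i) w"
  using pdv_eb_sym[OF slice_in_U inv_into_ix(1) inv_into_ix(1), of w i k, unfolded inv_into_ix(2)]
  by (simp add: pdv_omega mult_ac)

lemma omega_ix: "j \<in> {1..CARD('n)} \<Longrightarrow> 3 \<le> j \<Longrightarrow> omega (ix j) = F j"
  using ix_ge_3_neq bij_betw_ix_inv_into[OF ix] by (simp add: omega_def F_def z_indicator_def fun_eq_iff)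

lemma pdv_f: "w \<in> W \<Longrightarrow> pdv k f w = omega k w"
  unfolding f_def
  by (rule pdv_radial_potential[OF open_W convex_W a0_in_W smooth_on_omega omega_closed])

lemma smooth_on_f: "smooth_on W f"
  unfolding f_def
  by (rule smooth_on_radial_potential[OF open_W convex_W a0_in_W smooth_on_omega omega_closed])

lemma dz_f: "w \<in> W \<Longrightarrow> j \<in> {3..CARD('n)} \<Longrightarrow> dz ix (j - 2) f w = F j w"
proof -
  assume "w \<in> W" "j \<in> {3..CARD('n)}"
  moreover have "j - 2 + 2 = j" using \<open>j \<in> {3..CARD('n)}\<close> by auto
  ultimately show ?thesis using pdv_f[of w "ix j"] omega_ix[of j] by (simp add: dz_def)
qed

lemma eb_normal_form:
  assumes u: "u \<in> V" and i: "i \<in> {1..CARD('n)}"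
  shows "eb i u = \<bar>u $ ix 2\<bar> powr (- d) * F i (zmap ix m r u)"
proof -
  define \<rho> where "\<rho> = p2 / u $ ix 2"
  define \<mu> where "\<mu> = p1 - \<rho> * u $ ix 1"
  have uB: "u \<in> ball p R" and up: "u $ ix 2 * p2 > 0" and zB: "slice (zmap ix m r u) \<in> ball p R"
    using u by (auto simp: V_def)
  have u2: "u $ ix 2 \<noteq> 0" using up by auto
  have \<rho>: "\<rho> > 0" using up by (auto simp: \<rho>_def zero_less_divide_iff zero_less_mult_iff)
  have z: "slice (zmap ix m r u) = \<rho> *\<^sub>R u + \<mu> *\<^sub>R unit_vec"
    using slice_zmap[OF u2] by (simp add: \<rho>_def \<mu>_def)
  have seg: "closed_segment u (\<rho> *\<^sub>R u + \<mu> *\<^sub>R unit_vec) \<subseteq> U"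
    using closed_segment_subset[OF uB zB[unfolded z] convex_ball] R(2) by blast
  have "eb i (\<rho> *\<^sub>R u + \<mu> *\<^sub>R unit_vec) = \<rho> powr (- d) * eb i u"
    using euler_homogeneous_scaling[OF open_U smooth_on_eb[OF i] euler_eb_pdv[OF _ i]
        unit_invariant_eb_pdv[OF _ i] \<rho> seg] .
  moreover have "\<rho> = \<bar>p2\<bar> / \<bar>u $ ix 2\<bar>"
    using \<rho> unfolding \<rho>_def by (metis abs_divide abs_of_pos)
  ultimately have "F i (zmap ix m r u) = (\<bar>p2\<bar> powr d * \<bar>p2\<bar> powr (- d)) * \<bar>u $ ix 2\<bar> powr d * eb i u"
    by (simp add: F_def c0_def z powr_minus_divide powr_divide)
  then show ?thesis
    using p2_nonzero u2 by (simp add: powr_minus field_simps)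
qed

lemma eb_first_sum_const: "y \<in> ball p R \<Longrightarrow> eb_first_sum y = eb_first_sum p"
proof -
  assume y: "y \<in> ball p R"
  have "\<exists>c. \<forall>x\<in>ball p R. eb_first_sum x = c"
  proof (rule has_derivative_zero_constant[OF convex_ball])
    fix x assume "x \<in> ball p R"
    then show "(eb_first_sum has_derivative (\<lambda>h. 0)) (at x within ball p R)"
      using R(2) has_derivative_eb_first_sum has_derivative_at_withinI by blast
  qed
  then show ?thesis using y R(1) by auto
qed

definition C1 :: real where "C1 = c0 * eb_first_sum p"

lemma sum_F_first: "w \<in> W \<Longrightarrow> (\<Sum>\<alpha>\<in>{1..r}. F (bidx m \<alpha> 1) w) = C1"
proof -
  assume "w \<in> W"
  have "(\<Sum>\<alpha>\<in>{1..r}. F (bidx m \<alpha> 1) w) = c0 * eb_first_sum (slice w)"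
    by (simp add: F_def eb_first_sum_def sum_distrib_left)
  then show ?thesis using eb_first_sum_const \<open>w \<in> W\<close> by (simp add: W_def C1_def)
qed

lemma C1_eq_0: "d \<noteq> 0 \<Longrightarrow> C1 = 0"
  using eb_first_sum_euler[OF pU] by (simp add: C1_def)

lemma F_1: "w \<in> W \<Longrightarrow> F 1 w = - (\<Sum>\<alpha>\<in>{2..r}. dz ix (bidx m \<alpha> 1 - 2) f w) + C1"
proof -
  assume w: "w \<in> W"
  have "dz ix (bidx m \<alpha> 1 - 2) f w = F (bidx m \<alpha> 1) w" if "\<alpha> \<in> {2..r}" for \<alpha>
    using dz_f[OF w] bidx_first_in_range[of \<alpha>] bidx_first_ge_3[OF that] that by simp
  moreover have "{1..r} = insert 1 {2..r}" using r by auto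
  ultimately show ?thesis using sum_F_first[OF w] by simp
qed

definition G :: "real^'n \<Rightarrow> real" where
  "G w = F 2 w + (\<Sum>k\<in>UNIV. w $ k * omega k w) + (d - 1) * f w"

text \<open>The Euler equation for \<open>eb a\<close> at \<open>slice w\<close>, rewritten with the closedness
  \<open>\<partial>\<^sub>a eb\<^sub>b = \<partial>\<^sub>b eb\<^sub>a\<close> and the invariance along \<open>e\<close>; it says that \<open>G\<close> has vanishing differential.\<close>

lemma euler_on_slice:
  assumes w: "w \<in> W"
  shows "pdv i (F 2) w + d * omega i w + (\<Sum>k\<in>UNIV. w $ k * pdv i (omega k) w) = 0"
proof (cases "z_indicator i = 0")
  case True
  then show ?thesis using w card_ge_2 by (simp add: pdv_F pdv_omega omega_def)
next
  case False
  then have z_i: "z_indicator i = 1" by (simp add: z_indicator_def split: if_splits)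
  define a where "a = inv_into {1..CARD('n)} ix i"
  have a: "a \<in> {1..CARD('n)}" "ix a = i" using inv_into_ix by (simp_all add: a_def)
  define y where "y = slice w"
  have y: "y \<in> U" using slice_in_U[OF w] by (simp add: y_def)
  define D where "D k = pdv k (eb a) y" for k
  have D: "pdv i (eb (inv_into {1..CARD('n)} ix k)) y = D k" for k
    using pdv_eb_sym[OF y a(1) inv_into_ix(1), of k, unfolded inv_into_ix(2)] a(2) by (simp add: D_def)
  have "pdv i (F 2) w = c0 * p2 * D (ix 2)"
    using D[of "ix 2"] card_ge_2 w z_i bij_betw_ix_inv_into[OF ix, of 2] by (simp add: pdv_F y_def)
  moreover have "omega i w = c0 * eb a y" using z_i by (simp add: omega_def a_def y_def)
  moreover have "(\<Sum>k\<in>UNIV. w $ k * pdv i (omega k) w) = c0 * p2 * (\<Sum>k\<in>UNIV. z_indicator k * w $ k * D k)"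
    using z_i D by (simp add: pdv_omega[OF w] y_def sum_distrib_left mult_ac)
  moreover have "c0 * (p2 * (\<Sum>k\<in>UNIV. z_indicator k * w $ k * D k) + p2 * D (ix 2)) = c0 * (- d * eb a y)"
  proof -
    have "y $ k * D k = p2 * (z_indicator k * w $ k * D k) + p1 * (unit_vec $ k * D k)
        + (if k = ix 2 then p2 * D k else 0)" for k
      by (simp add: y_def slice_nth algebra_simps)
    then have "(\<Sum>k\<in>UNIV. y $ k * D k) = p2 * (\<Sum>k\<in>UNIV. z_indicator k * w $ k * D k)
        + p1 * (\<Sum>k\<in>UNIV. unit_vec $ k * D k) + p2 * D (ix 2)"
      by (simp add: sum.distrib sum_distrib_left)
    then show ?thesis
      using euler_eb_pdv[OF y a(1)] unit_invariant_eb_pdv[OF y a(1)] by (simp add: D_def)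
  qed
  ultimately show ?thesis by (simp add: algebra_simps)
qed

lemma has_derivative_G:
  assumes w: "w \<in> W"
  shows "(G has_derivative (\<lambda>h. 0)) (at w)"
proof -
  note deriv = smooth_on_has_derivative[OF open_W _ w]
  have "((\<lambda>w. w $ k) has_derivative (\<lambda>h. h $ k)) (at w)" for k
    by (intro bounded_linear_imp_has_derivative bounded_linear_vec_nth)
  then have "((\<lambda>w. \<Sum>k\<in>UNIV. w $ k * omega k w) has_derivative
      (\<lambda>h. \<Sum>k\<in>UNIV. w $ k * (\<Sum>i\<in>UNIV. h$i * pdv i (omega k) w) + h $ k * omega k w)) (at w)"
    by (intro has_derivative_sum has_derivative_mult deriv smooth_on_omega)
  then have "(G has_derivative (\<lambda>h. (\<Sum>i\<in>UNIV. h$i * pdv i (F 2) w) +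
      (\<Sum>k\<in>UNIV. w $ k * (\<Sum>i\<in>UNIV. h$i * pdv i (omega k) w) + h $ k * omega k w) +
      (d - 1) * (\<Sum>i\<in>UNIV. h$i * pdv i f w))) (at w)"
    unfolding G_def[abs_def] using card_ge_2
    by (intro has_derivative_add has_derivative_mult_right deriv smooth_on_F smooth_on_f) auto
  moreover have "(\<Sum>i\<in>UNIV. h$i * pdv i (F 2) w) +
      (\<Sum>k\<in>UNIV. w $ k * (\<Sum>i\<in>UNIV. h$i * pdv i (omega k) w) + h $ k * omega k w) +
      (d - 1) * (\<Sum>i\<in>UNIV. h$i * pdv i f w)
      = (\<Sum>i\<in>UNIV. h$i * (pdv i (F 2) w + d * omega i w + (\<Sum>k\<in>UNIV. w $ k * pdv i (omega k) w)))"
    for h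
  proof -
    have "(\<Sum>k\<in>UNIV. w $ k * (\<Sum>i\<in>UNIV. h$i * pdv i (omega k) w))
        = (\<Sum>i\<in>UNIV. h$i * (\<Sum>k\<in>UNIV. w $ k * pdv i (omega k) w))"
      unfolding sum_distrib_left by (subst sum.swap) (simp add: mult_ac)
    then show ?thesis
      using pdv_f[OF w] by (simp add: algebra_simps sum.distrib sum_distrib_left sum_subtractf)
  qed
  ultimately show ?thesis using euler_on_slice[OF w] by simp
qed

lemma G_const: "w \<in> W \<Longrightarrow> G w = G a0"
  using has_derivative_zero_constant[OF convex_W, of G] has_derivative_G a0_in_W
  by (metis has_derivative_at_withinI)

lemma sum_z_dz_f:
  assumes w: "w \<in> W"
  shows "(\<Sum>j\<in>{1..CARD('n) - 2}. w $ ix (j + 2) * dz ix j f w) = (\<Sum>k\<in>UNIV. w $ k * omega k w)"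
proof -
  have "(\<Sum>k\<in>UNIV. w $ k * omega k w) = (\<Sum>i\<in>{1..CARD('n)}. w $ ix i * omega (ix i) w)"
    by (rule bij_betw_ix_sum[OF ix])
  also have "\<dots> = (\<Sum>i\<in>{3..CARD('n)}. w $ ix i * omega (ix i) w)"
  proof (rule sum.mono_neutral_right)
    show "\<forall>i\<in>{1..CARD('n)} - {3..CARD('n)}. w $ ix i * omega (ix i) w = 0"
    proof
      fix i assume "i \<in> {1..CARD('n)} - {3..CARD('n)}"
      then have "i = 1 \<or> i = 2" by auto
      then show "w $ ix i * omega (ix i) w = 0" by (auto simp: omega_def z_indicator_def)
    qed
  qed auto
  also have "\<dots> = (\<Sum>j\<in>{1..CARD('n) - 2}. w $ ix (j + 2) * omega (ix (j + 2)) w)"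
  proof -
    have "{3..CARD('n)} = {1 + 2..(CARD('n) - 2) + 2}" using card_ge_2 by auto
    then show ?thesis by (simp only: sum.shift_bounds_cl_nat_ivl)
  qed
  also have "\<dots> = (\<Sum>j\<in>{1..CARD('n) - 2}. w $ ix (j + 2) * dz ix j f w)"
    using pdv_f[OF w] by (simp add: dz_def)
  finally show ?thesis ..
qed

lemma F_2: "w \<in> W \<Longrightarrow>
    F 2 w = - (\<Sum>j\<in>{1..CARD('n) - 2}. w $ ix (j + 2) * dz ix j f w) - (d - 1) * f w + G a0"
proof -
  assume w: "w \<in> W"
  have "F 2 w = G w - (\<Sum>k\<in>UNIV. w $ k * omega k w) - (d - 1) * f w" by (simp add: G_def)
  then show ?thesis by (simp only: G_const[OF w] sum_z_dz_f[OF w])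
qed

theorem normal_form:
  shows "\<exists>V W F f C\<^sub>1 C\<^sub>2. open V \<and> p \<in> V \<and> V \<subseteq> U \<and> open W \<and> zmap ix m r ` V \<subseteq> W \<and>
      smooth_on W f \<and> (\<forall>i\<in>{1..CARD('n)}. smooth_on W (F i)) \<and>
      (\<forall>u\<in>V. \<forall>i\<in>{1..CARD('n)}. eb i u = \<bar>u $ ix 2\<bar> powr (- d) * F i (zmap ix m r u)) \<and>
      (\<forall>w\<in>W.
         F 1 w = - (\<Sum>\<alpha>\<in>{2..r}. dz ix (bidx m \<alpha> 1 - 2) f w) + C\<^sub>1 \<and>
         F 2 w = - (\<Sum>j\<in>{1..CARD('n) - 2}. w $ ix (j + 2) * dz ix j f w) - (d - 1) * f w + C\<^sub>2 \<and>
         (\<forall>j\<in>{3..CARD('n)}. F j w = dz ix (j - 2) f w) \<and>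
         (\<Sum>\<alpha>\<in>{1..r}. F (bidx m \<alpha> 1) w) = C\<^sub>1) \<and>
      (d \<noteq> 0 \<longrightarrow> C\<^sub>1 = 0)"
  by (intro exI[of _ V] exI[of _ W] exI[of _ F] exI[of _ f] exI[of _ C1] exI[of _ "G a0"] conjI ballI impI
      open_V p_in_V V_subset_U open_W zmap_V_subset_W smooth_on_f smooth_on_F eb_normal_form
      F_1 F_2 dz_f[symmetric] sum_F_first C1_eq_0)

end

theorem mainTheorem2:
  fixes ix :: "nat \<Rightarrow> 'n::finite"
    and U :: "(real^'n) set" and p :: "real^'n"
    and r :: nat and m :: "nat \<Rightarrow> nat"
    and eb :: "nat \<Rightarrow> real^'n \<Rightarrow> real" and d :: real
  assumes ix: "bij_betw ix {1..CARD('n)} UNIV"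
    and r: "r \<ge> 1"
    and m_pos: "\<forall>\<alpha>\<in>{1..r}. m \<alpha> \<ge> 1"
    and m_sum: "(\<Sum>\<alpha>\<in>{1..r}. m \<alpha>) = CARD('n)"
    and m1: "m 1 \<ge> 2"
    and pU: "p \<in> U"
    and frob: "frobenius_coords ix U (hankel_metric m r eb) (\<lambda>l j k u. dh_c m r l j k)
                 (\<lambda>s u. dh_e m r s) (\<lambda>s u. u $ ix s) d"
    and jordan: "\<forall>u\<in>U. (\<forall>\<alpha>\<in>{1..r}. m \<alpha> \<ge> 2 \<longrightarrow> u $ ix (bidx m \<alpha> 2) \<noteq> 0) \<and>
                 (\<forall>\<alpha>\<in>{1..r}. \<forall>\<beta>\<in>{1..r}. \<alpha> \<noteq> \<beta> \<longrightarrow> u $ ix (bidx m \<alpha> 1) \<noteq> u $ ix (bidx m \<beta> 1))"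
  shows "\<exists>V W F f C\<^sub>1 C\<^sub>2. open V \<and> p \<in> V \<and> V \<subseteq> U \<and> open W \<and> zmap ix m r ` V \<subseteq> W \<and>
      smooth_on W f \<and> (\<forall>i\<in>{1..CARD('n)}. smooth_on W (F i)) \<and>
      (\<forall>u\<in>V. \<forall>i\<in>{1..CARD('n)}. eb i u = \<bar>u $ ix 2\<bar> powr (- d) * F i (zmap ix m r u)) \<and>
      (\<forall>w\<in>W.
         F 1 w = - (\<Sum>\<alpha>\<in>{2..r}. dz ix (bidx m \<alpha> 1 - 2) f w) + C\<^sub>1 \<and>
         F 2 w = - (\<Sum>j\<in>{1..CARD('n) - 2}. w $ ix (j + 2) * dz ix j f w) - (d - 1) * f w + C\<^sub>2 \<and>
         (\<forall>j\<in>{3..CARD('n)}. F j w = dz ix (j - 2) f w) \<and>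
         (\<Sum>\<alpha>\<in>{1..r}. F (bidx m \<alpha> 1) w) = C\<^sub>1) \<and>
      (d \<noteq> 0 \<longrightarrow> C\<^sub>1 = 0)"
proof -
  have "u $ ix 2 \<noteq> 0" if "u \<in> U" for u
  proof -
    have "\<forall>\<alpha>\<in>{1..r}. 2 \<le> m \<alpha> \<longrightarrow> u $ ix (bidx m \<alpha> 2) \<noteq> 0" using jordan that by blast
    moreover have "1 \<in> {1..r}" using r by simp
    ultimately have "u $ ix (bidx m 1 2) \<noteq> 0" using m1 by blast
    then show ?thesis by simp
  qed
  then interpret dh_frobenius_point m r ix U eb d p
    using r m_pos m_sum ix frob m1 pU by unfold_locales auto
  show ?thesis by (rule normal_form)
qed

end
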